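(* Let $H$ be a separable complex Hilbert space and $X$ a locally compact space with a positive Borel measure $\mu$. The maps $$\zeta:\operatorname{GL}(H)\times\overline{F}_0\to F,\ \zeta(A,f)=Af,\qquad \zeta^+:\operatorname{GL}^+(H)\times F_0\to F,\ \zeta^+(A,f)=Af$$ are continuous bijections, where $\operatorname{GL}(H)$ and $\operatorname{GL}^+(H)$ carry the operator norm topology and $F$, $F_0$, $\overline{F}_0$ carry the topology of the norm $\|f\|_J=\sup_{x\in X}\|f(x)\|_H$.
   Context: Inner products are linear in the first argument. A frame on $H$ is a map $f:X\to H$ such that $x\mapsto\langle\phi,f(x)\rangle$ is measurable for every $\phi\in H$ and there exist $0<A\le B$ with $A\|\phi\|^2\le\int_X|\langle\phi,f(x)\rangle|^2d\mu(x)\le B\|\phi\|^2$ for all $\phi\in H$; it is Parseval if $A=B=1$. $\operatorname{GL}(H)$ is the group of bounded invertible operators on $H$ with bounded inverse, $\operatorname{GL}^+(H)$ the set of positive elements of $\operatorname{GL}(H)$, $U(H)$ the unitary group. $J$ is the Banach space of maps $f:X\to H$ with $\|f\|_J<\infty$; $F$ is the set of frames in $J$ and $F_0$ the set of Parseval frames in $J$. For $A\in\operatorname{GL}(H)$ and $f:X\to H$, $(Af)(x)=A[f(x)]$. $\overline{F}_0\subset F_0$ is a fixed transversal of the orbit space $F_0/U(H)$, i.e. it contains exactly one element of each orbit $\{Vf:V\in U(H)\}$, $f\in F_0$ (a maximal set of unitarily inequivalent Parseval frames). *)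

theory Defs
  imports "HOL-Analysis.Analysis"
begin

text \<open>HOL-Analysis has no complex inner product spaces, so we introduce a type class:
  a real Banach space carrying a complex scalar multiplication (extending the real one)
  and a complex inner product, linear in the first argument, whose norm is the Banach norm.\<close>

class chilbert_space = banach +
  fixes scaleC :: "complex \<Rightarrow> 'a \<Rightarrow> 'a"
    and cinner :: "'a \<Rightarrow> 'a \<Rightarrow> complex"
  assumes scaleC_add_right: "scaleC c (x + y) = scaleC c x + scaleC c y"
    and scaleC_add_left: "scaleC (c + d) x = scaleC c x + scaleC d x"
    and scaleC_scaleC: "scaleC c (scaleC d x) = scaleC (c * d) x"
    and scaleC_one: "scaleC 1 x = x"
    and scaleR_scaleC: "scaleR r x = scaleC (complex_of_real r) x"
    and cinner_add_left: "cinner (x + y) z = cinner x z + cinner y z"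
    and cinner_scaleC_left: "cinner (scaleC c x) y = c * cinner x y"
    and cinner_commute: "cinner y x = cnj (cinner x y)"
    and norm_eq_sqrt_cinner: "norm x = sqrt (Re (cinner x x))"

definition separable_space :: "'a::topological_space itself \<Rightarrow> bool" where
  "separable_space _ \<longleftrightarrow> (\<exists>D::'a set. countable D \<and> closure D = UNIV)"

definition clinear_op :: "('h::chilbert_space \<Rightarrow> 'h) \<Rightarrow> bool" where
  "clinear_op A \<longleftrightarrow> (\<forall>x y. A (x + y) = A x + A y) \<and> (\<forall>c x. A (scaleC c x) = scaleC c (A x))"

definition bounded_op :: "('h::chilbert_space \<Rightarrow> 'h) \<Rightarrow> bool" where
  "bounded_op A \<longleftrightarrow> clinear_op A \<and> (\<exists>K. \<forall>x. norm (A x) \<le> K * norm x)"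

definition GL :: "('h::chilbert_space \<Rightarrow> 'h) set" where
  "GL = {A. bounded_op A \<and> (\<exists>B. bounded_op B \<and> A \<circ> B = id \<and> B \<circ> A = id)}"

definition positive_op :: "('h::chilbert_space \<Rightarrow> 'h) \<Rightarrow> bool" where
  "positive_op A \<longleftrightarrow> bounded_op A \<and> (\<forall>x y. cinner (A x) y = cinner x (A y))
      \<and> (\<forall>x. 0 \<le> Re (cinner (A x) x))"

definition GL_plus :: "('h::chilbert_space \<Rightarrow> 'h) set" where
  "GL_plus = {A \<in> GL. positive_op A}"

definition unitary_group :: "('h::chilbert_space \<Rightarrow> 'h) set" where
  "unitary_group = {U. bounded_op U \<and> bij U \<and> (\<forall>x y. cinner (U x) (U y) = cinner x y)}"

definition op_dist :: "('h::chilbert_space \<Rightarrow> 'h) \<Rightarrow> ('h \<Rightarrow> 'h) \<Rightarrow> real" where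
  "op_dist A B = onorm (\<lambda>x. A x - B x)"

definition is_frame :: "'x measure \<Rightarrow> ('x \<Rightarrow> 'h::chilbert_space) \<Rightarrow> bool" where
  "is_frame M f \<longleftrightarrow>
     (\<forall>\<phi>. (\<lambda>x. cinner \<phi> (f x)) \<in> borel_measurable M) \<and>
     (\<exists>a b. 0 < a \<and> a \<le> b \<and>
        (\<forall>\<phi>. ennreal (a * (norm \<phi>)\<^sup>2) \<le> (\<integral>\<^sup>+ x. ennreal ((cmod (cinner \<phi> (f x)))\<^sup>2) \<partial>M)
            \<and> (\<integral>\<^sup>+ x. ennreal ((cmod (cinner \<phi> (f x)))\<^sup>2) \<partial>M) \<le> ennreal (b * (norm \<phi>)\<^sup>2)))"

definition is_parseval_frame :: "'x measure \<Rightarrow> ('x \<Rightarrow> 'h::chilbert_space) \<Rightarrow> bool" where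
  "is_parseval_frame M f \<longleftrightarrow>
     (\<forall>\<phi>. (\<lambda>x. cinner \<phi> (f x)) \<in> borel_measurable M) \<and>
     (\<forall>\<phi>. (\<integral>\<^sup>+ x. ennreal ((cmod (cinner \<phi> (f x)))\<^sup>2) \<partial>M) = ennreal ((norm \<phi>)\<^sup>2))"

definition J_space :: "('x \<Rightarrow> 'h::chilbert_space) set" where
  "J_space = {f. bounded (range f)}"

definition J_norm :: "('x \<Rightarrow> 'h::chilbert_space) \<Rightarrow> real" where
  "J_norm f = (SUP x. norm (f x))"

definition J_dist :: "('x \<Rightarrow> 'h::chilbert_space) \<Rightarrow> ('x \<Rightarrow> 'h) \<Rightarrow> real" where
  "J_dist f g = J_norm (\<lambda>x. f x - g x)"

definition frames :: "'x measure \<Rightarrow> ('x \<Rightarrow> 'h::chilbert_space) set" where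
  "frames M = {f \<in> J_space. is_frame M f}"

definition parseval_frames :: "'x measure \<Rightarrow> ('x \<Rightarrow> 'h::chilbert_space) set" where
  "parseval_frames M = {f \<in> J_space. is_parseval_frame M f}"

text \<open>T is a transversal of the orbit space F0/U(H).\<close>
definition unitary_transversal :: "'x measure \<Rightarrow> ('x \<Rightarrow> 'h::chilbert_space) set \<Rightarrow> bool" where
  "unitary_transversal M T \<longleftrightarrow> T \<subseteq> parseval_frames M \<and>
     (\<forall>f \<in> parseval_frames M. \<exists>!g. g \<in> T \<and> (\<exists>V \<in> unitary_group. g = V \<circ> f))"

definition continuous_OJ :: "(('h::chilbert_space \<Rightarrow> 'h) \<times> ('x \<Rightarrow> 'h)) set
     \<Rightarrow> (('h \<Rightarrow> 'h) \<times> ('x \<Rightarrow> 'h) \<Rightarrow> ('x \<Rightarrow> 'h)) \<Rightarrow> bool" where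
  "continuous_OJ D z \<longleftrightarrow> (\<forall>(A, f) \<in> D. \<forall>e>0. \<exists>d>0. \<forall>(B, g) \<in> D.
      op_dist B A < d \<and> J_dist g f < d \<longrightarrow> J_dist (z (B, g)) (z (A, f)) < e)"

end

theory Submission
  imports Defs "HOL-Computational_Algebra.Formal_Power_Series"
begin

text \<open>
  Continuity of \<open>(A, f) \<mapsto> A f\<close> is the estimate
  \<open>\<parallel>B g - A f\<parallel>\<^sub>J \<le> \<parallel>B\<parallel> \<parallel>g - f\<parallel>\<^sub>J + \<parallel>B - A\<parallel> \<parallel>f\<parallel>\<^sub>J\<close>.

  For surjectivity, the frame operator \<open>S\<close> of a frame \<open>g\<close> (obtained from the sesquilinear form
  \<open>\<integral> \<langle>\<phi>, g\<rangle> \<langle>g, \<psi>\<rangle>\<close> by the Riesz representation theorem) is positive and coercive, so it has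
  an invertible positive square root \<open>R\<close>, given by the binomial series of \<open>(1 - t)\<^sup>1\<^sup>/\<^sup>2\<close> in
  \<open>I - S/k\<close>; then \<open>R\<^sup>-\<^sup>1 g\<close> is Parseval and \<open>g = R (R\<^sup>-\<^sup>1 g)\<close>.  Composing with a unitary moves
  \<open>R\<^sup>-\<^sup>1 g\<close> into the transversal.

  For injectivity, a Parseval frame \<open>f\<close> satisfies \<open>\<integral> |\<langle>\<phi>, T f\<rangle>|\<^sup>2 = \<parallel>T\<^sup>*\<phi>\<parallel>\<^sup>2\<close>.  Hence
  \<open>A f = B g\<close> with \<open>A, B\<close> positive forces \<open>A\<^sup>2 = B\<^sup>2\<close>, and positive square roots are unique;
  with \<open>f, g\<close> in the transversal, \<open>B\<^sup>-\<^sup>1 A\<close> maps \<open>f\<close> to \<open>g\<close> and has an isometric adjoint, so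
  it is unitary and \<open>f = g\<close>; finally \<open>A = B\<close> because \<open>(A - B)\<^sup>* = 0\<close> by the same identity.
\<close>

lemma cinner_add_right: "cinner x (y + z) = cinner x y + cinner (x::'a::chilbert_space) z"
  using cinner_commute[of x "y + z"] cinner_commute[of x y] cinner_commute[of x z]
  by (simp add: cinner_add_left)

lemma cinner_scaleC_right: "cinner x (scaleC c y) = cnj c * cinner (x::'a::chilbert_space) y"
  using cinner_commute[of x "scaleC c y"] cinner_commute[of x y] by (simp add: cinner_scaleC_left)

lemma cnj_cinner: "cnj (cinner x y) = cinner y (x::'a::chilbert_space)"
  by (simp add: cinner_commute[of y x])

lemma scaleC_minus1: "scaleC (- 1) (x::'a::chilbert_space) = - x"
  using scaleR_scaleC[of "- 1" x] by simp

lemma cinner_minus_left: "cinner (- x) y = - cinner (x::'a::chilbert_space) y"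
  using cinner_scaleC_left[of "- 1" x y] by (simp add: scaleC_minus1)

lemma cinner_minus_right: "cinner x (- y) = - cinner (x::'a::chilbert_space) y"
  using cinner_scaleC_right[of x "- 1" y] by (simp add: scaleC_minus1)

lemma cinner_zero_left [simp]: "cinner 0 (x::'a::chilbert_space) = 0"
  using cinner_minus_left[of 0 x] by simp

lemma cinner_zero_right [simp]: "cinner x (0::'a::chilbert_space) = 0"
  using cinner_minus_right[of x 0] by simp

lemma cinner_diff_left: "cinner (x - y) z = cinner x z - cinner (y::'a::chilbert_space) z"
  by (simp only: diff_conv_add_uminus cinner_add_left cinner_minus_left)

lemma cinner_diff_right: "cinner x (y - z) = cinner x y - cinner (x::'a::chilbert_space) z"
  by (simp only: diff_conv_add_uminus cinner_add_right cinner_minus_right)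

lemma cinner_scaleR_left: "cinner (r *\<^sub>R x) y = of_real r * cinner (x::'a::chilbert_space) y"
  by (simp add: scaleR_scaleC cinner_scaleC_left)

lemma cinner_scaleR_right: "cinner x (r *\<^sub>R y) = of_real r * cinner (x::'a::chilbert_space) y"
  by (simp add: scaleR_scaleC cinner_scaleC_right)

lemma scaleC_scaleR_commute: "scaleC c (r *\<^sub>R (x::'a::chilbert_space)) = r *\<^sub>R scaleC c x"
  by (simp add: scaleR_scaleC scaleC_scaleC mult.commute)

lemma cinner_self: "cinner x x = of_real ((norm (x::'a::chilbert_space))\<^sup>2)"
proof -
  have "0 \<le> Re (cinner x x)"
  proof (rule ccontr)
    assume "\<not> 0 \<le> Re (cinner x x)"
    then show False using norm_eq_sqrt_cinner[of x] by (metis norm_ge_zero not_le real_sqrt_lt_0_iff)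
  qed
  then have "Re (cinner x x) = (norm x)\<^sup>2"
    by (simp add: norm_eq_sqrt_cinner)
  moreover have "Im (cinner x x) = 0"
    using cinner_commute[of x x] by (metis Reals_cnj_iff complex_is_Real_iff)
  ultimately show ?thesis by (simp add: complex_eq_iff)
qed

lemma Re_cinner_self: "Re (cinner x x) = (norm (x::'a::chilbert_space))\<^sup>2"
  by (simp add: cinner_self)

lemma cinner_self_eq_zero [simp]: "cinner x x = 0 \<longleftrightarrow> (x::'a::chilbert_space) = 0"
  by (simp add: cinner_self)

lemma norm_scaleC: "norm (scaleC c (x::'a::chilbert_space)) = cmod c * norm x"
proof -
  have "cinner (scaleC c x) (scaleC c x) = (c * cnj c) * cinner x x"
    by (simp add: cinner_scaleC_left cinner_scaleC_right)
  also have "c * cnj c = of_real ((cmod c)\<^sup>2)" by (rule complex_norm_square[symmetric])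
  finally have "of_real ((norm (scaleC c x))\<^sup>2) = (of_real ((cmod c)\<^sup>2 * (norm x)\<^sup>2) :: complex)"
    unfolding cinner_self of_real_mult by simp
  then have "(norm (scaleC c x))\<^sup>2 = (cmod c * norm x)\<^sup>2"
    by (metis of_real_eq_iff power_mult_distrib)
  then show ?thesis by (simp add: power2_eq_iff_nonneg)
qed

lemma norm_add_sq: "(norm (x + y))\<^sup>2 = (norm x)\<^sup>2 + (norm y)\<^sup>2 + 2 * Re (cinner x (y::'a::chilbert_space))"
proof -
  have "cinner (x + y) (x + y) = cinner x x + cinner y y + (cinner x y + cinner y x)"
    by (simp add: cinner_add_left cinner_add_right)
  also have "cinner x y + cinner y x = of_real (2 * Re (cinner x y))"
    by (subst cinner_commute[of y x]) (simp add: complex_add_cnj)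
  finally have "of_real ((norm (x + y))\<^sup>2)
      = (of_real ((norm x)\<^sup>2 + (norm y)\<^sup>2 + 2 * Re (cinner x y)) :: complex)"
    unfolding cinner_self of_real_add by simp
  then show ?thesis by (metis of_real_eq_iff)
qed

lemma norm_diff_sq: "(norm (x - y))\<^sup>2 = (norm x)\<^sup>2 + (norm y)\<^sup>2 - 2 * Re (cinner x (y::'a::chilbert_space))"
  using norm_add_sq[of x "- y"] by (simp add: cinner_minus_right)

lemma parallelogram_law:
  "(norm (x + y))\<^sup>2 + (norm (x - y))\<^sup>2 = 2 * (norm x)\<^sup>2 + 2 * (norm (y::'a::chilbert_space))\<^sup>2"
  using norm_add_sq[of x y] norm_diff_sq[of x y] by simp

lemma norm_diff_projection_sq:
  fixes x y :: "'a::chilbert_space"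
  assumes "y \<noteq> 0"
  shows "(norm (x - scaleC (cinner x y / of_real ((norm y)\<^sup>2)) y))\<^sup>2
          = (norm x)\<^sup>2 - (cmod (cinner x y))\<^sup>2 / (norm y)\<^sup>2"
proof -
  define a n2 where "a = cinner x y" and "n2 = (norm y)\<^sup>2"
  define t where "t = a / of_real n2"
  have n2: "n2 > 0" using assms by (simp add: n2_def)
  have aa: "a * cnj a = of_real ((cmod a)\<^sup>2)" by (rule complex_norm_square[symmetric])
  have e: "cinner (x - scaleC t y) (x - scaleC t y)
      = cinner x x - cnj t * a - t * cnj a + t * cnj t * of_real n2"
    by (simp add: cinner_diff_left cinner_diff_right cinner_scaleC_left cinner_scaleC_right
        algebra_simps a_def n2_def cinner_commute[of y x] cinner_self[of y])
  have 1: "cnj t * a = of_real ((cmod a)\<^sup>2 / n2)"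
    and 2: "t * cnj a = of_real ((cmod a)\<^sup>2 / n2)"
    and 3: "t * cnj t * of_real n2 = of_real ((cmod a)\<^sup>2 / n2)"
    unfolding t_def using aa n2 by (simp_all add: mult.commute power2_eq_square)
  have "cinner (x - scaleC t y) (x - scaleC t y) = of_real ((norm x)\<^sup>2 - (cmod a)\<^sup>2 / n2)"
    unfolding e 1 2 3 cinner_self[of x] by simp
  then show ?thesis unfolding cinner_self t_def a_def n2_def by (simp only: of_real_eq_iff)
qed

lemma norm_cinner_le: "cmod (cinner x y) \<le> norm x * norm (y::'a::chilbert_space)"
proof (cases "y = 0")
  case False
  then have "(cmod (cinner x y))\<^sup>2 / (norm y)\<^sup>2 \<le> (norm x)\<^sup>2"
    by (metis norm_diff_projection_sq zero_le_power2 diff_ge_0_iff_ge)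
  then have "(cmod (cinner x y))\<^sup>2 \<le> (norm x * norm y)\<^sup>2"
    using False by (simp add: pos_divide_le_eq power_mult_distrib)
  then show ?thesis by (rule power2_le_imp_le) simp
qed simp

lemma Re_cinner_le: "Re (cinner x y) \<le> norm x * norm (y::'a::chilbert_space)"
  using norm_cinner_le[of x y] complex_Re_le_cmod[of "cinner x y"] by linarith

lemma cinner_ext: "(\<And>y. cinner x y = cinner z y) \<Longrightarrow> (x::'a::chilbert_space) = z"
  using cinner_self_eq_zero[of "x - z"] by (simp add: cinner_diff_left)

lemma cinner_ext_right: "(\<And>y. cinner y x = cinner y z) \<Longrightarrow> (x::'a::chilbert_space) = z"
  by (metis cinner_commute cinner_ext)

lemma bounded_linear_cinner_left: "bounded_linear (\<lambda>x::'a::chilbert_space. cinner x y)"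
  by (rule bounded_linear_intro[where K="norm y"])
     (auto simp: cinner_add_left cinner_scaleR_left scaleR_conv_of_real norm_cinner_le)

lemma bounded_opD:
  assumes "bounded_op A"
  shows "A (x + y) = A x + A y" "A (scaleC c x) = scaleC c (A x)"
  using assms unfolding bounded_op_def clinear_op_def by auto

lemma bounded_op_bound:
  assumes "bounded_op A"
  obtains K where "K > 0" "\<And>x. norm (A x) \<le> K * norm x"
proof -
  from assms obtain K where K: "\<And>x. norm (A x) \<le> K * norm x"
    unfolding bounded_op_def by auto
  have "norm (A x) \<le> max K 1 * norm x" for x
    using K[of x] by (meson max.cobounded1 mult_right_mono norm_ge_zero order_trans)
  then show ?thesis by (intro that[of "max K 1"]) auto
qed

lemma bounded_op_scaleR: "bounded_op A \<Longrightarrow> A (r *\<^sub>R x) = r *\<^sub>R A x"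
  by (simp add: scaleR_scaleC bounded_opD(2))

lemma bounded_op_linear: "bounded_op A \<Longrightarrow> bounded_linear A"
proof -
  assume A: "bounded_op A"
  obtain K where "\<And>x. norm (A x) \<le> K * norm x" using bounded_op_bound[OF A] by auto
  then show ?thesis
    by (intro bounded_linear_intro[where K=K])
       (auto simp: bounded_opD[OF A] bounded_op_scaleR[OF A] mult.commute)
qed

lemma bounded_op_0: "bounded_op A \<Longrightarrow> A 0 = 0"
  using bounded_op_linear linear_simps(3) by blast

lemma bounded_op_diff: "bounded_op A \<Longrightarrow> A (x - y) = A x - A y"
  using bounded_op_linear linear_simps(2) by blast

lemma bounded_op_sum: "bounded_op A \<Longrightarrow> A (sum f S) = (\<Sum>i\<in>S. A (f i))"
  by (metis bounded_op_linear bounded_linear.linear linear_sum)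

lemma bounded_op_id: "bounded_op (\<lambda>x. x)"
  unfolding bounded_op_def clinear_op_def by (auto intro!: exI[of _ 1])

lemma bounded_op_comp: "bounded_op A \<Longrightarrow> bounded_op B \<Longrightarrow> bounded_op (\<lambda>x. A (B x))"
proof -
  assume A: "bounded_op A" and B: "bounded_op B"
  obtain K where K: "K > 0" "\<And>x. norm (A x) \<le> K * norm x" using bounded_op_bound[OF A] by auto
  obtain L where L: "\<And>x. norm (B x) \<le> L * norm x" using bounded_op_bound[OF B] by auto
  have "norm (A (B x)) \<le> K * (L * norm x)" for x
    using K(2)[of "B x"] L[of x] K(1) by (meson less_imp_le mult_left_mono order_trans)
  then have "norm (A (B x)) \<le> (K * L) * norm x" for x by (simp add: mult.assoc)
  then show ?thesis unfolding bounded_op_def clinear_op_def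
    by (auto simp: bounded_opD[OF A] bounded_opD[OF B])
qed

lemma bounded_op_add: "bounded_op A \<Longrightarrow> bounded_op B \<Longrightarrow> bounded_op (\<lambda>x. A x + B x)"
proof -
  assume A: "bounded_op A" and B: "bounded_op B"
  obtain K where K: "\<And>x. norm (A x) \<le> K * norm x" using bounded_op_bound[OF A] by auto
  obtain L where L: "\<And>x. norm (B x) \<le> L * norm x" using bounded_op_bound[OF B] by auto
  have "norm (A x + B x) \<le> (K + L) * norm x" for x
    using norm_triangle_ineq[of "A x" "B x"] K[of x] L[of x] by (simp add: distrib_right)
  then show ?thesis unfolding bounded_op_def clinear_op_def
    by (auto simp: bounded_opD[OF A] bounded_opD[OF B] scaleC_add_right)
qed

lemma bounded_op_scaleC: "bounded_op A \<Longrightarrow> bounded_op (\<lambda>x. scaleC c (A x))"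
proof -
  assume A: "bounded_op A"
  obtain K where K: "\<And>x. norm (A x) \<le> K * norm x" using bounded_op_bound[OF A] by auto
  have "norm (scaleC c (A x)) \<le> (cmod c * K) * norm x" for x
    using K[of x] by (simp add: norm_scaleC mult.assoc mult_left_mono)
  then show ?thesis unfolding bounded_op_def clinear_op_def
    by (auto simp: bounded_opD[OF A] scaleC_add_right scaleC_scaleC mult.commute
        intro!: exI[of _ "cmod c * K"])
qed

lemma bounded_op_scaleR_op: "bounded_op A \<Longrightarrow> bounded_op (\<lambda>x. r *\<^sub>R A x)"
  using bounded_op_scaleC[of A "of_real r"] by (simp add: scaleR_scaleC)

lemma bounded_op_diff_op: "bounded_op A \<Longrightarrow> bounded_op B \<Longrightarrow> bounded_op (\<lambda>x. A x - B x)"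
  using bounded_op_add[of A "\<lambda>x. (- 1) *\<^sub>R B x"] bounded_op_scaleR_op[of B "- 1"] by simp

text \<open>Polarization; this needs complex scalars.\<close>

lemma bounded_op_eq_0_if_form_eq_0:
  assumes "bounded_op T" and "\<And>x. cinner (T x) x = 0"
  shows "T x = 0"
proof (rule cinner_ext[where z=0])
  fix y
  have "cinner (T x) y + cinner (T y) x = 0"
    using assms(2)[of "x + y"] assms(2)[of x] assms(2)[of y]
    by (simp add: bounded_opD[OF assms(1)] cinner_add_left cinner_add_right add.commute)
  moreover have "cnj \<i> * cinner (T x) y + \<i> * cinner (T y) x = 0"
    using assms(2)[of "x + scaleC \<i> y"] assms(2)[of x] assms(2)[of y]
    by (simp add: bounded_opD[OF assms(1)] cinner_add_left cinner_add_right
        cinner_scaleC_left cinner_scaleC_right)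
  ultimately show "cinner (T x) y = cinner 0 y" by (simp add: algebra_simps)
qed

lemma isometry_preserves_cinner:
  assumes "bounded_op L" and "\<And>x. norm (L x) = norm x"
  shows "cinner (L x) (L y) = cinner x y"
proof -
  have Re: "Re (cinner (L x) (L y)) = Re (cinner x y)" for x y
    using norm_add_sq[of "L x" "L y"] norm_add_sq[of x y] assms(2)[of "x + y"] assms(2)[of x]
      assms(2)[of y]
    by (simp add: bounded_opD[OF assms(1)])
  have "Im (cinner (L x) (L y)) = Im (cinner x y)"
    using Re[of x "scaleC \<i> y"] by (simp add: bounded_opD[OF assms(1)] cinner_scaleC_right)
  with Re[of x y] show ?thesis by (simp add: complex_eq_iff)
qed

section \<open>Riesz representation and adjoints\<close>

lemma Cauchy_if_norm_diff_sq_le: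
  fixes v :: "nat \<Rightarrow> 'a::real_normed_vector"
  assumes "\<And>m n. (norm (v n - v m))\<^sup>2 \<le> 2 / real (Suc n) + 2 / real (Suc m)"
  shows "Cauchy v"
proof (rule metric_CauchyI)
  fix e :: real assume e: "e > 0"
  obtain N :: nat where N: "4 / e\<^sup>2 < real N" using reals_Archimedean2 by blast
  have "4 < real N * e\<^sup>2" using N e by (simp add: field_simps)
  also have "\<dots> < real (Suc N) * e\<^sup>2" using e by simp
  finally have NN: "4 / real (Suc N) < e\<^sup>2" by (simp add: field_simps)
  show "\<exists>M. \<forall>m\<ge>M. \<forall>n\<ge>M. dist (v m) (v n) < e"
  proof (intro exI allI impI)
    fix m n assume "N \<le> m" "N \<le> n"
    then have "2 / real (Suc m) \<le> 2 / real (Suc N)" "2 / real (Suc n) \<le> 2 / real (Suc N)"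
      by (auto intro!: divide_left_mono)
    then have "(norm (v m - v n))\<^sup>2 < e\<^sup>2" using assms[of n m] NN by (simp add: norm_minus_commute)
    then show "dist (v m) (v n) < e" using e by (simp add: dist_norm power_less_imp_less_base)
  qed
qed

lemma closest_point_exists:
  fixes K :: "'a::chilbert_space set"
  assumes "closed K" "convex K" "K \<noteq> {}"
  obtains v where "v \<in> K" "\<And>w. w \<in> K \<Longrightarrow> norm (z - v) \<le> norm (z - w)"
proof -
  let ?S = "(\<lambda>w. (norm (z - w))\<^sup>2) ` K"
  define D where "D = Inf ?S"
  have bdd: "bdd_below ?S" by (rule bdd_belowI[of _ 0]) auto
  have D_le: "D \<le> (norm (z - w))\<^sup>2" if "w \<in> K" for w
    unfolding D_def using that bdd by (intro cInf_lower) auto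
  have "\<exists>w\<in>K. (norm (z - w))\<^sup>2 < D + 1 / real (Suc n)" for n
    using cInf_lessD[of ?S "D + 1 / real (Suc n)"] assms(3) by (auto simp: D_def)
  then obtain v where v: "\<And>n. v n \<in> K" "\<And>n. (norm (z - v n))\<^sup>2 < D + 1 / real (Suc n)"
    by metis
  text \<open>The parallelogram law applied to \<open>z - v n\<close>, \<open>z - v m\<close>, whose midpoint lies in \<open>K\<close>.\<close>
  have "(norm (v n - v m))\<^sup>2 \<le> 2 / real (Suc n) + 2 / real (Suc m)" for n m
  proof -
    have mid: "(1/2) *\<^sub>R (v n + v m) \<in> K"
      using convexD[OF assms(2) v(1)[of n] v(1)[of m], of "1/2" "1/2"] by (simp add: scaleR_right_distrib)
    have "z - v n + (z - v m) = 2 *\<^sub>R (z - (1/2) *\<^sub>R (v n + v m))"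
      by (simp add: algebra_simps scaleR_2)
    then have "(norm (z - v n + (z - v m)))\<^sup>2 \<ge> 4 * D"
      using D_le[OF mid] by (simp add: power_mult_distrib)
    moreover have "(norm (v n - v m))\<^sup>2 = (norm (z - v n - (z - v m)))\<^sup>2"
      by (simp add: norm_minus_commute)
    ultimately show ?thesis
      using parallelogram_law[of "z - v n" "z - v m"] v(2)[of n] v(2)[of m] by simp
  qed
  then have "Cauchy v" by (rule Cauchy_if_norm_diff_sq_le)
  then obtain v0 where lim: "v \<longlonglongrightarrow> v0" using Cauchy_convergent_iff convergent_def by blast
  have "v0 \<in> K" using closed_sequentially[OF assms(1)] v(1) lim by blast
  have "(norm (z - v0))\<^sup>2 \<le> D"
  proof (rule LIMSEQ_le)
    show "(\<lambda>n. (norm (z - v n))\<^sup>2) \<longlonglongrightarrow> (norm (z - v0))\<^sup>2"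
      by (intro tendsto_intros lim)
    have "(\<lambda>n. D + inverse (real (Suc n))) \<longlonglongrightarrow> D + 0"
      by (intro tendsto_intros LIMSEQ_inverse_real_of_nat)
    then show "(\<lambda>n. D + 1 / real (Suc n)) \<longlonglongrightarrow> D" by (simp add: divide_inverse)
    show "\<exists>N. \<forall>n\<ge>N. (norm (z - v n))\<^sup>2 \<le> D + 1 / real (Suc n)"
      using v(2) less_imp_le by blast
  qed
  show ?thesis
  proof (rule that[OF \<open>v0 \<in> K\<close> power2_le_imp_le])
    fix w assume "w \<in> K"
    show "(norm (z - v0))\<^sup>2 \<le> (norm (z - w))\<^sup>2"
      using \<open>(norm (z - v0))\<^sup>2 \<le> D\<close> D_le[OF \<open>w \<in> K\<close>] by linarith
  qed simp
qed

text \<open>A nonzero component of \<open>z - v\<close> along \<open>k\<close> would yield a point of \<open>K\<close> closer to \<open>z\<close>.\<close>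

lemma closest_point_orthogonal:
  fixes z v k :: "'a::chilbert_space"
  assumes closest: "\<And>w. w \<in> K \<Longrightarrow> norm (z - v) \<le> norm (z - w)"
    and line: "\<And>c. v + scaleC c k \<in> K"
  shows "cinner (z - v) k = 0"
proof (rule ccontr)
  assume nz: "cinner (z - v) k \<noteq> 0"
  then have k0: "k \<noteq> 0" by auto
  define t where "t = cinner (z - v) k / of_real ((norm k)\<^sup>2)"
  have "norm (z - v) \<le> norm (z - v - scaleC t k)"
    using closest[OF line[of t]] by (simp add: algebra_simps)
  then have "(norm (z - v))\<^sup>2 \<le> (norm (z - v - scaleC t k))\<^sup>2" by (simp add: power_mono)
  then have "(cmod (cinner (z - v) k))\<^sup>2 / (norm k)\<^sup>2 \<le> 0"
    unfolding t_def norm_diff_projection_sq[OF k0] by simp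
  moreover have "(cmod (cinner (z - v) k))\<^sup>2 / (norm k)\<^sup>2 > 0" using nz k0 by simp
  ultimately show False by simp
qed

theorem riesz_representation:
  fixes l :: "'a::chilbert_space \<Rightarrow> complex"
  assumes add: "\<And>x y. l (x + y) = l x + l y"
    and scale: "\<And>c x. l (scaleC c x) = c * l x"
    and bound: "\<And>x. cmod (l x) \<le> K * norm x"
  shows "\<exists>w. \<forall>x. l x = cinner x w"
proof (cases "\<forall>x. l x = 0")
  case True
  then show ?thesis by (intro exI[of _ 0]) simp
next
  case False
  then obtain z0 where z0: "l z0 \<noteq> 0" by auto
  define z where "z = scaleC (inverse (l z0)) z0"
  have lz: "l z = 1" using z0 by (simp add: z_def scale)
  have l_scaleR: "l (r *\<^sub>R x) = r *\<^sub>R l x" for r x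
    using scale[of "of_real r" x] by (simp add: scaleR_scaleC scaleR_conv_of_real)
  have lin: "bounded_linear l"
    by (rule bounded_linear_intro[where K=K]) (auto simp: add l_scaleR bound mult.commute)
  have l0: "l 0 = 0" and l_diff: "l (x - y) = l x - l y" for x y
    using linear_simps[OF lin] by auto
  let ?ker = "{v. l v = 0}"
  have "closed ?ker"
    by (intro closed_Collect_eq continuous_on_const linear_continuous_on lin)
  moreover have "convex ?ker"
    unfolding convex_def by (simp add: add l_scaleR)
  ultimately obtain v0 where v0: "l v0 = 0" and min: "\<And>v. l v = 0 \<Longrightarrow> norm (z - v0) \<le> norm (z - v)"
    using closest_point_exists[where K="?ker" and z=z] l0 by auto
  define u where "u = z - v0"
  have lu: "l u = 1" using lz v0 by (simp add: u_def l_diff)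
  have orth: "cinner u k = 0" if "l k = 0" for k
    unfolding u_def
    by (rule closest_point_orthogonal[where K="{v. l v = 0}"]) (use min v0 that in \<open>auto simp: add scale\<close>)
  show ?thesis
  proof (intro exI[of _ "scaleC (of_real (inverse ((norm u)\<^sup>2))) u"] allI)
    fix x
    have "l (x - scaleC (l x) u) = 0" using l_diff scale lu by simp
    then have "cinner u (x - scaleC (l x) u) = 0" by (rule orth)
    then have "cinner x u = l x * of_real ((norm u)\<^sup>2)"
      using cinner_commute[of x u] by (simp add: cinner_diff_right cinner_scaleC_right cinner_self)
    moreover have "u \<noteq> 0" using lu l0 by auto
    ultimately show "l x = cinner x (scaleC (of_real (inverse ((norm u)\<^sup>2))) u)"
      by (simp add: cinner_scaleC_right field_simps)
  qed
qed

definition adj :: "('a::chilbert_space \<Rightarrow> 'a) \<Rightarrow> 'a \<Rightarrow> 'a" where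
  "adj A = (\<lambda>y. SOME w. \<forall>x. cinner (A x) y = cinner x w)"

lemma cinner_adj:
  assumes A: "bounded_op A"
  shows "cinner (A x) y = cinner x (adj A y)"
proof -
  obtain K where K: "K > 0" "\<And>x. norm (A x) \<le> K * norm x" using bounded_op_bound[OF A] by auto
  have "cmod (cinner (A x) y) \<le> K * norm y * norm x" for x
    using norm_cinner_le[of "A x" y] mult_right_mono[OF K(2)[of x], of "norm y"]
    by (simp add: mult_ac)
  then have "\<exists>w. \<forall>x. cinner (A x) y = cinner x w"
    by (intro riesz_representation[where K="K * norm y"])
       (simp_all add: bounded_opD[OF A] cinner_add_left cinner_scaleC_left)
  then show ?thesis unfolding adj_def by (rule someI_ex[THEN spec])
qed

lemma cinner_adj':
  assumes "bounded_op A"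
  shows "cinner x (A y) = cinner (adj A x) y"
  using cinner_adj[OF assms, of y x] cinner_commute[of x "A y"] cinner_commute[of "adj A x" y]
  by simp

lemma bounded_op_adj:
  assumes A: "bounded_op A"
  shows "bounded_op (adj A)"
proof -
  obtain K where K: "K > 0" "\<And>x. norm (A x) \<le> K * norm x" using bounded_op_bound[OF A] by auto
  have "norm (adj A y) \<le> K * norm y" for y
  proof -
    have "(norm (adj A y))\<^sup>2 = cmod (cinner (A (adj A y)) y)"
      by (simp add: cinner_adj[OF A] cinner_self norm_power)
    also have "\<dots> \<le> norm (A (adj A y)) * norm y" by (rule norm_cinner_le)
    also have "\<dots> \<le> K * norm (adj A y) * norm y" using K by (intro mult_right_mono) auto
    finally show ?thesis
      using K(1) by (cases "adj A y = 0") (auto simp: power2_eq_square mult_ac)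
  qed
  moreover have "adj A (y + z) = adj A y + adj A z" "adj A (scaleC c y) = scaleC c (adj A y)" for c y z
    by (rule cinner_ext_right;
        simp add: cinner_adj[OF A, symmetric] cinner_add_right cinner_scaleC_right)+
  ultimately show ?thesis unfolding bounded_op_def clinear_op_def by blast
qed

lemma adj_unique:
  assumes "bounded_op A" and "\<And>x y. cinner (A x) y = cinner x (B y)"
  shows "adj A y = B y"
  by (rule cinner_ext_right) (simp add: cinner_adj[OF assms(1), symmetric] assms(2))

lemma adj_comp:
  "bounded_op A \<Longrightarrow> bounded_op B \<Longrightarrow> adj (\<lambda>x. A (B x)) y = adj B (adj A y)"
  by (rule adj_unique) (simp_all add: cinner_adj bounded_op_comp)

lemma adj_inverse:
  assumes "bounded_op A" "bounded_op Ai" "\<And>x. A (Ai x) = x"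
  shows "adj Ai (adj A y) = y"
proof -
  have "adj Ai (adj A y) = adj (\<lambda>x. A (Ai x)) y" by (rule adj_comp[OF assms(1,2), symmetric])
  also have "\<dots> = y" using assms(3) by (simp add: adj_unique[OF bounded_op_id])
  finally show ?thesis .
qed

lemma positive_opD:
  assumes "positive_op A"
  shows "bounded_op A" "cinner (A x) y = cinner x (A y)" "0 \<le> Re (cinner (A x) x)"
  using assms unfolding positive_op_def by auto

lemma GL_iff:
  "A \<in> GL \<longleftrightarrow> bounded_op A \<and> (\<exists>Ai. bounded_op Ai \<and> (\<forall>x. A (Ai x) = x) \<and> (\<forall>x. Ai (A x) = x))"
  unfolding GL_def by (auto simp: fun_eq_iff)

lemma GLI:
  "bounded_op A \<Longrightarrow> bounded_op Ai \<Longrightarrow> (\<And>x. A (Ai x) = x) \<Longrightarrow> (\<And>x. Ai (A x) = x) \<Longrightarrow> A \<in> GL"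
  unfolding GL_iff by blast

lemma GLE:
  assumes "A \<in> GL"
  obtains Ai where "bounded_op A" "bounded_op Ai" "\<And>x. A (Ai x) = x" "\<And>x. Ai (A x) = x"
  using assms unfolding GL_iff by blast

lemma GL_plusD: "A \<in> GL_plus \<Longrightarrow> A \<in> GL" "A \<in> GL_plus \<Longrightarrow> positive_op A"
  unfolding GL_plus_def by auto

lemma unitary_norm:
  assumes "V \<in> unitary_group"
  shows "norm (V x) = norm x"
proof -
  have "cinner (V x) (V x) = cinner x x" using assms unfolding unitary_group_def by auto
  then have "(norm (V x))\<^sup>2 = (norm x)\<^sup>2" by (simp add: cinner_self del: of_real_power)
  then show ?thesis by (simp add: power2_eq_iff_nonneg)
qed

lemma unitary_GL:
  assumes V: "V \<in> unitary_group"
  shows "V \<in> GL"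
proof -
  have V_op: "bounded_op V" and bij: "bij V" using V unfolding unitary_group_def by auto
  have VVi: "V (inv V x) = x" and ViV: "inv V (V x) = x" for x
    using bij by (simp_all add: bij_is_surj surj_f_inv_f bij_is_inj inv_f_f)
  have "inj V" using bij by (rule bij_is_inj)
  then have "inv V (x + y) = inv V x + inv V y" "inv V (scaleC c x) = scaleC c (inv V x)" for c x y
    by (simp_all add: injD VVi bounded_opD[OF V_op] inj_eq[symmetric, of V])
  moreover have "norm (inv V x) \<le> 1 * norm x" for x
    using unitary_norm[OF V, of "inv V x"] by (simp add: VVi)
  ultimately have "bounded_op (inv V)" unfolding bounded_op_def clinear_op_def by blast
  then show ?thesis using V_op VVi ViV by (intro GLI[of V "inv V"])
qed

lemma id_unitary: "(\<lambda>x. x) \<in> unitary_group"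
  unfolding unitary_group_def using bounded_op_id by (auto simp: bij_def)

section \<open>Square roots of positive operators\<close>

definition binom_coef :: "real \<Rightarrow> nat \<Rightarrow> real" where
  "binom_coef a n = (-1) ^ n * (a gchoose n)"

lemma binom_coef_0 [simp]: "binom_coef a 0 = 1"
  by (simp add: binom_coef_def)

lemma binom_coef_Suc: "binom_coef a (Suc n) = binom_coef a n * (real n - a) / real (Suc n)"
proof -
  have Suc: "(a gchoose Suc n) = (a gchoose n) * (a - real n) / real (Suc n)"
    using gbinomial_mult_1[of a n] by (simp add: field_simps)
  show ?thesis unfolding binom_coef_def Suc by (simp add: field_simps)
qed

lemma abs_binom_coef_le_1:
  assumes "\<bar>a\<bar> \<le> 1"
  shows "\<bar>binom_coef a n\<bar> \<le> 1"
proof (induction n)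
  case (Suc n)
  have "\<bar>real n - a\<bar> / real (Suc n) \<le> 1" using assms by (simp add: field_simps)
  then show ?case
    using Suc mult_mono[OF Suc, of "\<bar>real n - a\<bar> / real (Suc n)" 1]
    by (simp add: binom_coef_Suc abs_mult)
qed simp

lemma binom_coef_nonpos:
  assumes "0 \<le> a" "a \<le> 1" "n \<ge> 1"
  shows "binom_coef a n \<le> 0"
  using assms(3)
proof (induction n rule: dec_induct)
  case base
  show ?case using assms(1) by (simp add: binom_coef_Suc[of a 0, simplified])
next
  case (step n)
  then have "0 \<le> (real n - a) / real (Suc n)" using assms(2) by simp
  from mult_nonpos_nonneg[OF step.IH this] show ?case by (simp add: binom_coef_Suc)
qed

lemma binom_coef_convolution:
  "(\<Sum>i\<le>n. binom_coef a i * binom_coef b (n - i)) = binom_coef (a + b) n"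
proof -
  have "binom_coef a i * binom_coef b (n - i) = (-1) ^ n * ((a gchoose i) * (b gchoose (n - i)))"
    if "i \<le> n" for i
  proof -
    have "(-1::real) ^ i * (-1) ^ (n - i) = (-1) ^ n"
      using that by (metis power_add le_add_diff_inverse)
    then show ?thesis unfolding binom_coef_def by (metis (no_types, lifting) mult.assoc mult.left_commute)
  qed
  then have "(\<Sum>i\<le>n. binom_coef a i * binom_coef b (n - i))
      = (-1) ^ n * (\<Sum>i\<le>n. (a gchoose i) * (b gchoose (n - i)))"
    unfolding sum_distrib_left by (intro sum.cong) auto
  also have "(\<Sum>i\<le>n. (a gchoose i) * (b gchoose (n - i))) = (a + b) gchoose n"
    using gbinomial_Vandermonde[of a b n] by (simp add: atMost_atLeast0)
  finally show ?thesis by (simp add: binom_coef_def)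
qed

lemma binom_coef_zero_left: "binom_coef 0 n = (if n = 0 then 1 else 0)"
  by (simp add: binom_coef_def gbinomial_0_left)

lemma binom_coef_one_left: "binom_coef 1 n = (if n = 0 then 1 else if n = 1 then - 1 else 0)"
proof -
  have "((1::real) gchoose n) = real (1 choose n)"
    using binomial_gbinomial[of 1 n, where 'a=real] by simp
  then have "((1::real) gchoose n) = (if n = 0 then 1 else if n = 1 then 1 else 0)"
    by (cases n) (auto simp: binomial_eq_0)
  then show ?thesis by (simp add: binom_coef_def)
qed

lemma binom_coef_sums:
  assumes "\<bar>t\<bar> < 1"
  shows "(\<lambda>n. binom_coef a n * t ^ n) sums ((1 - t) powr a)"
proof -
  have "(a gchoose n) * (- t) ^ n = binom_coef a n * t ^ n" for n
    unfolding binom_coef_def power_minus[of t n] by (simp only: mult_ac)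
  then show ?thesis using gen_binomial_real[of "- t" a] assms by simp
qed

lemma Zfun_square_minus_triangle:
  fixes a b :: "nat \<Rightarrow> real"
  assumes "\<And>i. 0 \<le> a i" "\<And>j. 0 \<le> b j" "summable a" "summable b"
  shows "Zfun (\<lambda>n. \<Sum>(i, j) \<in> {..<n} \<times> {..<n} - {(i, j). i + j < n}. a i * b j) sequentially"
proof -
  let ?S1 = "\<lambda>n::nat. {..<n} \<times> {..<n}"
  let ?S2 = "\<lambda>n::nat. {(i,j). i + j < n}"
  let ?f = "\<lambda>(i,j). a i * b j"
  have f_nonneg: "0 \<le> ?f p" for p using assms(1,2) by (auto split: prod.split)
  then have norm_sum_f: "norm (sum ?f A) = sum ?f A" for A
    by (simp add: sum_nonneg)
  have "(\<lambda>n. (\<Sum>k<n. a k) * (\<Sum>k<n. b k)) \<longlonglongrightarrow> (\<Sum>k. a k) * (\<Sum>k. b k)"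
    using assms(3,4) by (intro tendsto_mult summable_LIMSEQ)
  then have "convergent (\<lambda>n. sum ?f (?S1 n))"
    by (simp only: sum_product sum.Sigma[rule_format] finite_lessThan convergent_def) blast
  then have Cauchy: "Cauchy (\<lambda>n. sum ?f (?S1 n))"
    by (rule convergent_Cauchy)
  show ?thesis
  proof (rule ZfunI, simp only: eventually_sequentially norm_sum_f)
    fix e :: real assume e: "0 < e"
    from CauchyD[OF Cauchy e] obtain N
      where "\<forall>m\<ge>N. \<forall>n\<ge>N. norm (sum ?f (?S1 m) - sum ?f (?S1 n)) < e" ..
    moreover have S1_mono: "?S1 n \<subseteq> ?S1 m" if "n \<le> m" for m n using that by auto
    ultimately have "\<And>m n. N \<le> n \<Longrightarrow> n \<le> m \<Longrightarrow> norm (sum ?f (?S1 m - ?S1 n)) < e"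
      by (simp only: sum_diff finite_lessThan finite_cartesian_product S1_mono)
    then have N: "\<And>m n. N \<le> n \<Longrightarrow> n \<le> m \<Longrightarrow> sum ?f (?S1 m - ?S1 n) < e"
      by (simp only: norm_sum_f)
    show "\<exists>N. \<forall>n\<ge>N. sum ?f (?S1 n - ?S2 n) < e"
    proof (intro exI allI impI)
      fix n assume "2 * N \<le> n"
      have "sum ?f (?S1 n - ?S2 n) \<le> sum ?f (?S1 n - ?S1 (n div 2))"
        by (intro sum_mono2 f_nonneg) auto
      also have "\<dots> < e" using \<open>2 * N \<le> n\<close> by (intro N) auto
      finally show "sum ?f (?S1 n - ?S2 n) < e" .
    qed
  qed
qed

definition op_series :: "('a::chilbert_space \<Rightarrow> 'a) \<Rightarrow> (nat \<Rightarrow> real) \<Rightarrow> 'a \<Rightarrow> 'a" where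
  "op_series Q c x = (\<Sum>n. c n *\<^sub>R (Q ^^ n) x)"

locale contraction =
  fixes Q :: "'a::chilbert_space \<Rightarrow> 'a" and r :: real
  assumes bounded: "bounded_op Q"
    and selfadjoint: "\<And>x y. cinner (Q x) y = cinner x (Q y)"
    and norm_le: "\<And>x. norm (Q x) \<le> r * norm x"
    and r_nonneg: "0 \<le> r" and r_less_1: "r < 1"
begin

lemma bounded_power: "bounded_op (Q ^^ n)"
  by (induction n) (auto simp: bounded_op_id bounded_op_comp bounded)

lemma norm_power_le: "norm ((Q ^^ n) x) \<le> r ^ n * norm x"
proof (induction n)
  case (Suc n)
  have "norm ((Q ^^ Suc n) x) \<le> r * norm ((Q ^^ n) x)" using norm_le by simp
  also have "\<dots> \<le> r * (r ^ n * norm x)" using Suc r_nonneg by (intro mult_left_mono)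
  finally show ?case by simp
qed simp

lemma norm_series_term_le: "\<bar>c n\<bar> \<le> 1 \<Longrightarrow> norm (c n *\<^sub>R (Q ^^ n) x) \<le> r ^ n * norm x"
  using mult_mono[of "\<bar>c n\<bar>" 1 "norm ((Q ^^ n) x)" "r ^ n * norm x"] norm_power_le[of n x]
  by simp

lemma summable_geometric_norm: "summable (\<lambda>n. r ^ n * norm x)"
  using summable_geometric[of r] r_nonneg r_less_1 by (intro summable_mult2) auto

lemma summable_norm_series:
  assumes "\<And>n. \<bar>c n\<bar> \<le> 1"
  shows "summable (\<lambda>n. norm (c n *\<^sub>R (Q ^^ n) x))"
proof (rule summable_comparison_test'[OF summable_geometric_norm[of x]])
  show "norm (norm (c n *\<^sub>R (Q ^^ n) x)) \<le> r ^ n * norm x" for n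
    using norm_series_term_le[of c n x] assms by simp
qed

lemma summable_series: "(\<And>n. \<bar>c n\<bar> \<le> 1) \<Longrightarrow> summable (\<lambda>n. c n *\<^sub>R (Q ^^ n) x)"
  by (rule summable_norm_cancel[OF summable_norm_series])

lemma norm_op_series_le:
  assumes "\<And>n. \<bar>c n\<bar> \<le> 1"
  shows "norm (op_series Q c x) \<le> norm x / (1 - r)"
proof -
  have "norm (op_series Q c x) \<le> (\<Sum>n. norm (c n *\<^sub>R (Q ^^ n) x))"
    unfolding op_series_def by (rule summable_norm[OF summable_norm_series[OF assms]])
  also have "\<dots> \<le> (\<Sum>n. r ^ n * norm x)"
    by (intro suminf_le summable_norm_series summable_geometric_norm assms norm_series_term_le)
  also have "\<dots> = norm x / (1 - r)"
    using suminf_mult2[OF summable_geometric[of r], of "norm x"] suminf_geometric[of r]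
      r_nonneg r_less_1 by simp
  finally show ?thesis .
qed

lemma op_series_add:
  assumes "\<And>n. \<bar>c n\<bar> \<le> 1"
  shows "op_series Q c (x + y) = op_series Q c x + op_series Q c y"
  unfolding op_series_def
  by (simp add: bounded_opD[OF bounded_power] scaleR_add_right suminf_add summable_series[OF assms])

lemma op_series_scaleC:
  assumes "\<And>n. \<bar>c n\<bar> \<le> 1"
  shows "op_series Q c (scaleC d x) = scaleC d (op_series Q c x)"
proof -
  have "bounded_linear (\<lambda>x. scaleC d x)"
    using bounded_op_linear[OF bounded_op_scaleC[OF bounded_op_id]] .
  then have "scaleC d (op_series Q c x) = (\<Sum>n. scaleC d (c n *\<^sub>R (Q ^^ n) x))"
    unfolding op_series_def by (rule bounded_linear.suminf[OF _ summable_series[OF assms]])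
  then show ?thesis by (simp add: op_series_def bounded_opD[OF bounded_power] scaleC_scaleR_commute)
qed

lemma bounded_op_series:
  assumes "\<And>n. \<bar>c n\<bar> \<le> 1"
  shows "bounded_op (op_series Q c)"
  unfolding bounded_op_def clinear_op_def
  using op_series_add[OF assms] op_series_scaleC[OF assms] norm_op_series_le[OF assms]
  by (auto intro!: exI[of _ "1 / (1 - r)"])

lemma op_series_commute:
  assumes c: "\<And>n. \<bar>c n\<bar> \<le> 1" and C: "bounded_op C" and commute: "\<And>x. C (Q x) = Q (C x)"
  shows "C (op_series Q c x) = op_series Q c (C x)"
proof -
  have "C ((Q ^^ n) x) = (Q ^^ n) (C x)" for n
    by (induction n) (simp_all add: commute)
  moreover have "C (op_series Q c x) = (\<Sum>n. C (c n *\<^sub>R (Q ^^ n) x))"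
    unfolding op_series_def
    by (rule bounded_linear.suminf[OF bounded_op_linear[OF C] summable_series[OF c]])
  ultimately show ?thesis by (simp add: op_series_def bounded_op_scaleR[OF C])
qed

lemma cinner_op_series_sums:
  assumes "\<And>n. \<bar>c n\<bar> \<le> 1"
  shows "(\<lambda>n. of_real (c n) * cinner ((Q ^^ n) x) y) sums cinner (op_series Q c x) y"
  using bounded_linear.sums[OF bounded_linear_cinner_left summable_sums[OF summable_series[OF assms]]]
  by (simp add: op_series_def cinner_scaleR_left)

lemma selfadjoint_power: "cinner ((Q ^^ n) x) y = cinner x ((Q ^^ n) y)"
proof (induction n arbitrary: y)
  case (Suc n)
  have "cinner ((Q ^^ Suc n) x) y = cinner ((Q ^^ n) x) (Q y)" by (simp add: selfadjoint)
  also have "\<dots> = cinner x ((Q ^^ Suc n) y)" by (simp add: Suc funpow_Suc_right del: funpow.simps)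
  finally show ?case .
qed simp

lemma selfadjoint_op_series:
  assumes "\<And>n. \<bar>c n\<bar> \<le> 1"
  shows "cinner (op_series Q c x) y = cinner x (op_series Q c y)"
proof -
  have "(\<lambda>n. cnj (of_real (c n) * cinner ((Q ^^ n) y) x)) sums cnj (cinner (op_series Q c y) x)"
    using cinner_op_series_sums[OF assms, where x=y and y=x] by (simp only: sums_cnj)
  then have "(\<lambda>n. of_real (c n) * cinner ((Q ^^ n) x) y) sums cinner x (op_series Q c y)"
    by (simp add: cnj_cinner selfadjoint_power)
  with cinner_op_series_sums[OF assms] show ?thesis by (rule sums_unique2)
qed

lemma norm_partial_series_le:
  assumes "\<And>n. \<bar>c n\<bar> \<le> 1"
  shows "norm (\<Sum>i<n. c i *\<^sub>R (Q ^^ i) x) \<le> norm x / (1 - r)"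
proof -
  have "norm (\<Sum>i<n. c i *\<^sub>R (Q ^^ i) x) \<le> (\<Sum>i<n. r ^ i * norm x)"
    using norm_series_term_le[OF assms] by (intro order_trans[OF norm_sum sum_mono])
  also have "\<dots> \<le> (\<Sum>i. r ^ i * norm x)"
    using r_nonneg by (intro sum_le_suminf summable_geometric_norm) auto
  also have "\<dots> = norm x / (1 - r)"
    using suminf_mult2[OF summable_geometric[of r], of "norm x"] suminf_geometric[of r]
      r_nonneg r_less_1 by simp
  finally show ?thesis .
qed

lemma op_series_square_partial_sums:
  assumes c: "\<And>n. \<bar>c n\<bar> \<le> 1" and d: "\<And>n. \<bar>d n\<bar> \<le> 1"
  shows "(\<lambda>n. \<Sum>(i, j)\<in>{..<n} \<times> {..<n}. (c i * d j) *\<^sub>R (Q ^^ (i + j)) x)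
           \<longlonglongrightarrow> op_series Q c (op_series Q d x)"
proof -
  define z where "z = op_series Q d x"
  define y where "y n = (\<Sum>j<n. d j *\<^sub>R (Q ^^ j) x)" for n
  define P where "P n v = (\<Sum>i<n. c i *\<^sub>R (Q ^^ i) v)" for n v
  have P_y: "(\<Sum>(i, j)\<in>{..<n} \<times> {..<n}. (c i * d j) *\<^sub>R (Q ^^ (i + j)) x) = P n (y n)" for n
    unfolding P_def y_def
    by (simp add: bounded_op_sum[OF bounded_power] bounded_op_scaleR[OF bounded_power]
        scaleR_sum_right funpow_add sum.cartesian_product)
  have P_diff: "P n v - P n w = P n (v - w)" for n v w
    unfolding P_def
    by (simp add: sum_subtractf bounded_op_diff[OF bounded_power] scaleR_diff_right)
  have "y \<longlonglongrightarrow> z"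
    unfolding y_def z_def op_series_def by (rule summable_LIMSEQ[OF summable_series[OF d]])
  then have "(\<lambda>n. norm (y n - z) / (1 - r)) \<longlonglongrightarrow> 0"
    by (intro tendsto_divide_zero tendsto_norm_zero LIM_zero)
  then have "(\<lambda>n. P n (y n) - P n z) \<longlonglongrightarrow> 0"
    by (rule Lim_null_comparison[rotated])
       (unfold P_diff, simp add: P_def norm_partial_series_le[OF c])
  moreover have "(\<lambda>n. P n z) \<longlonglongrightarrow> op_series Q c z"
    unfolding P_def op_series_def by (rule summable_LIMSEQ[OF summable_series[OF c]])
  ultimately show ?thesis
    using tendsto_add unfolding z_def by (fastforce simp: P_y)
qed

text \<open>The Cauchy product formula; the square and triangular partial sums differ by a tail of
  a convergent double series.\<close>

lemma op_series_mult_sums: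
  assumes c: "\<And>n. \<bar>c n\<bar> \<le> 1" and d: "\<And>n. \<bar>d n\<bar> \<le> 1"
  shows "(\<lambda>k. (\<Sum>i\<le>k. c i * d (k - i)) *\<^sub>R (Q ^^ k) x) sums op_series Q c (op_series Q d x)"
proof -
  let ?S1 = "\<lambda>n::nat. {..<n} \<times> {..<n}"
  let ?S2 = "\<lambda>n::nat. {(i,j). i + j < n}"
  let ?g = "\<lambda>(i,j). (c i * d j) *\<^sub>R (Q ^^ (i + j)) x"
  have "norm (?g p) \<le> (case p of (i, j) \<Rightarrow> (r ^ i * norm x) * r ^ j)" for p
  proof (cases p)
    case (Pair i j)
    have "norm (?g p) = \<bar>c i\<bar> * \<bar>d j\<bar> * norm ((Q ^^ (i + j)) x)" by (simp add: Pair abs_mult)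
    also have "\<dots> \<le> 1 * 1 * (r ^ (i + j) * norm x)"
      using c d norm_power_le by (intro mult_mono) auto
    finally show ?thesis by (simp add: Pair power_add mult_ac)
  qed
  then have "norm (sum ?g A) \<le> (\<Sum>(i, j)\<in>A. (r ^ i * norm x) * r ^ j)" for A
    by (intro order_trans[OF norm_sum sum_mono])
  then have le: "norm (sum ?g A) \<le> norm (\<Sum>(i, j)\<in>A. (r ^ i * norm x) * r ^ j)" for A
    using r_nonneg by (simp add: sum_nonneg split_beta)
  have "Zfun (\<lambda>n. \<Sum>(i, j)\<in>?S1 n - ?S2 n. (r ^ i * norm x) * r ^ j) sequentially"
    using r_nonneg r_less_1
    by (intro Zfun_square_minus_triangle summable_geometric_norm summable_geometric) auto
  then have "Zfun (\<lambda>n. sum ?g (?S1 n - ?S2 n)) sequentially"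
    by (rule Zfun_le) (intro allI le)
  moreover have "?S2 n \<subseteq> ?S1 n" for n by auto
  ultimately have "(\<lambda>n. sum ?g (?S1 n) - sum ?g (?S2 n)) \<longlonglongrightarrow> 0"
    unfolding tendsto_Zfun_iff diff_0_right
    by (simp only: sum_diff finite_lessThan finite_cartesian_product)
  with op_series_square_partial_sums[OF c d]
  have "(\<lambda>n. sum ?g (?S2 n)) \<longlonglongrightarrow> op_series Q c (op_series Q d x)"
    by (rule Lim_transform2)
  then have "(\<lambda>n. \<Sum>k<n. \<Sum>i\<le>k. (c i * d (k - i)) *\<^sub>R (Q ^^ (i + (k - i))) x)
      \<longlonglongrightarrow> op_series Q c (op_series Q d x)"
    by (simp only: sum.triangle_reindex)
  then show ?thesis unfolding sums_def by (simp add: scaleR_sum_left)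
qed

lemma op_series_binom_coef_mult_sums:
  assumes "\<bar>a\<bar> \<le> 1" "\<bar>b\<bar> \<le> 1"
  shows "(\<lambda>k. binom_coef (a + b) k *\<^sub>R (Q ^^ k) x) sums
           op_series Q (binom_coef a) (op_series Q (binom_coef b) x)"
  using op_series_mult_sums[where c="binom_coef a" and d="binom_coef b",
      OF abs_binom_coef_le_1[OF assms(1)] abs_binom_coef_le_1[OF assms(2)]]
  by (simp add: binom_coef_convolution)

abbreviation (input) "sqrt_series \<equiv> op_series Q (binom_coef (1/2))"
abbreviation (input) "inv_sqrt_series \<equiv> op_series Q (binom_coef (- (1/2)))"

lemma sqrt_series_squared: "sqrt_series (sqrt_series x) = x - Q x"
proof -
  have "(\<lambda>k. binom_coef 1 k *\<^sub>R (Q ^^ k) x) sums (\<Sum>k\<in>{0, 1}. binom_coef 1 k *\<^sub>R (Q ^^ k) x)"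
    by (rule sums_finite) (auto simp: binom_coef_one_left)
  then have "(\<lambda>k. binom_coef 1 k *\<^sub>R (Q ^^ k) x) sums (x - Q x)"
    by (simp add: binom_coef_one_left)
  moreover have "(\<lambda>k. binom_coef 1 k *\<^sub>R (Q ^^ k) x) sums sqrt_series (sqrt_series x)"
    using op_series_binom_coef_mult_sums[of "1/2" "1/2"] by simp
  ultimately show ?thesis by (rule sums_unique2[symmetric])
qed

lemma sqrt_series_inverse:
  "sqrt_series (inv_sqrt_series x) = x" "inv_sqrt_series (sqrt_series x) = x"
proof -
  have "(\<lambda>k. binom_coef 0 k *\<^sub>R (Q ^^ k) x) sums (\<Sum>k\<in>{0}. binom_coef 0 k *\<^sub>R (Q ^^ k) x)"
    by (rule sums_finite) (auto simp: binom_coef_zero_left)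
  then have id: "(\<lambda>k. binom_coef 0 k *\<^sub>R (Q ^^ k) x) sums x" by simp
  have "(\<lambda>k. binom_coef 0 k *\<^sub>R (Q ^^ k) x) sums sqrt_series (inv_sqrt_series x)"
    using op_series_binom_coef_mult_sums[of "1/2" "- 1/2" x] by simp
  with id show "sqrt_series (inv_sqrt_series x) = x" by (rule sums_unique2[symmetric])
  have "(\<lambda>k. binom_coef 0 k *\<^sub>R (Q ^^ k) x) sums inv_sqrt_series (sqrt_series x)"
    using op_series_binom_coef_mult_sums[of "- 1/2" "1/2" x] by simp
  with id show "inv_sqrt_series (sqrt_series x) = x" by (rule sums_unique2[symmetric])
qed

text \<open>Since all coefficients but the first are \<open>\<le> 0\<close>, the quadratic form of the series is
  bounded below by the scalar series at \<open>t = r\<close>, whose sum \<open>(1 - r)\<^sup>1\<^sup>/\<^sup>2\<close> is nonnegative.\<close>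

lemma sqrt_series_nonneg: "0 \<le> Re (cinner (sqrt_series x) x)"
proof -
  have form: "(\<lambda>n. binom_coef (1/2) n * Re (cinner ((Q ^^ n) x) x)) sums Re (cinner (sqrt_series x) x)"
    using sums_Re[OF cinner_op_series_sums[OF abs_binom_coef_le_1]] by simp
  have scalar: "(\<lambda>n. binom_coef (1/2) n * r ^ n * (norm x)\<^sup>2) sums ((1 - r) powr (1/2) * (norm x)\<^sup>2)"
    using binom_coef_sums[of r "1/2"] r_nonneg r_less_1 by (intro sums_mult2) auto
  have le: "binom_coef (1/2) n * r ^ n * (norm x)\<^sup>2 \<le> binom_coef (1/2) n * Re (cinner ((Q ^^ n) x) x)"
    for n
  proof (cases "n = 0")
    case False
    have "Re (cinner ((Q ^^ n) x) x) \<le> r ^ n * (norm x)\<^sup>2"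
      using Re_cinner_le[of "(Q ^^ n) x" x] mult_right_mono[OF norm_power_le[of n x], of "norm x"]
      by (simp add: power2_eq_square mult.assoc)
    then show ?thesis using False binom_coef_nonpos[of "1/2" n]
      by (simp add: mult.assoc mult_left_mono_neg)
  qed (simp add: Re_cinner_self)
  have "(1 - r) powr (1/2) * (norm x)\<^sup>2 \<le> Re (cinner (sqrt_series x) x)"
    by (rule sums_le[OF le scalar form])
  moreover have "0 \<le> (1 - r) powr (1/2) * (norm x)\<^sup>2" by simp
  ultimately show ?thesis by linarith
qed

end

text \<open>Scaling \<open>P\<close> so that \<open>\<parallel>P\<parallel> \<le> k\<close>, coercivity turns \<open>I - P/k\<close> into a strict contraction.\<close>

lemma coercive_shift_contraction:
  assumes P: "positive_op P" and c: "c > 0"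
    and coercive: "\<And>x. c * (norm x)\<^sup>2 \<le> Re (cinner (P x) x)"
  obtains k r where "k > 0" "0 \<le> r" "r < 1" "\<And>x. norm (x - (1 / k) *\<^sub>R P x) \<le> r * norm x"
proof -
  obtain K where K: "K > 0" "\<And>x. norm (P x) \<le> K * norm x"
    using bounded_op_bound[OF positive_opD(1)[OF P]] by auto
  define k where "k = max (max K (K\<^sup>2 / c)) c"
  define r where "r = sqrt (1 - c / k)"
  have "K\<^sup>2 / c \<le> k" by (simp add: k_def)
  then have k: "k > 0" "K\<^sup>2 \<le> c * k" "c \<le> k"
    using c by (auto simp: k_def field_simps)
  then have r: "0 \<le> r" "r < 1" "r\<^sup>2 = 1 - c / k" using c by (auto simp: r_def)
  have "norm (x - (1 / k) *\<^sub>R P x) \<le> r * norm x" for x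
  proof (rule power2_le_imp_le)
    have "(norm (x - (1 / k) *\<^sub>R P x))\<^sup>2
        = (norm x)\<^sup>2 + (norm (P x))\<^sup>2 / k\<^sup>2 - 2 * Re (cinner (P x) x) / k"
      using k(1) by (simp add: norm_diff_sq cinner_scaleR_right positive_opD(2)[OF P, symmetric]
          power_divide power_mult_distrib)
    also have "(norm (P x))\<^sup>2 / k\<^sup>2 \<le> (c / k) * (norm x)\<^sup>2"
    proof -
      have "(norm (P x))\<^sup>2 \<le> (K * norm x)\<^sup>2" using K by (intro power_mono) auto
      also have "\<dots> \<le> (c * k) * (norm x)\<^sup>2" using k(2) by (simp add: power_mult_distrib mult_right_mono)
      finally show ?thesis using k(1) by (simp add: field_simps power2_eq_square)
    qed
    also have "2 * Re (cinner (P x) x) / k \<ge> 2 * (c / k) * (norm x)\<^sup>2"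
      using coercive[of x] k(1) by (simp add: field_simps)
    then have "(norm x)\<^sup>2 + (c / k) * (norm x)\<^sup>2 - 2 * Re (cinner (P x) x) / k
        \<le> (r * norm x)\<^sup>2"
      by (simp add: power_mult_distrib r(3) algebra_simps)
    finally show "(norm (x - (1 / k) *\<^sub>R P x))\<^sup>2 \<le> (r * norm x)\<^sup>2" by simp
  qed (use r in simp)
  with k(1) r(1,2) show ?thesis by (rule that)
qed

lemma contraction_shift:
  assumes P: "positive_op P" and "0 \<le> r" "r < 1"
    and "\<And>x. norm (x - (1 / k) *\<^sub>R P x) \<le> r * norm x"
  shows "contraction (\<lambda>x. x - (1 / k) *\<^sub>R P x) r"
proof
  show "bounded_op (\<lambda>x. x - (1 / k) *\<^sub>R P x)"
    by (intro bounded_op_diff_op bounded_op_id bounded_op_scaleR_op positive_opD(1)[OF P])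
  show "cinner (x - (1 / k) *\<^sub>R P x) y = cinner x (y - (1 / k) *\<^sub>R P y)" for x y
    by (simp add: cinner_diff_left cinner_diff_right cinner_scaleR_left cinner_scaleR_right
        positive_opD(2)[OF P])
qed (use assms in auto)

theorem positive_sqrt_exists:
  assumes P: "positive_op P" and c: "c > 0"
    and coercive: "\<And>x. c * (norm x)\<^sup>2 \<le> Re (cinner (P x) x)"
  shows "\<exists>R \<in> GL_plus. (\<forall>x. R (R x) = P x)
           \<and> (\<forall>C. bounded_op C \<and> (\<forall>y. C (P y) = P (C y)) \<longrightarrow> (\<forall>x. C (R x) = R (C x)))"
proof -
  obtain k r where k: "k > 0" and r: "0 \<le> r" "r < 1"
    and contr: "\<And>x. norm (x - (1 / k) *\<^sub>R P x) \<le> r * norm x"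
    using coercive_shift_contraction[OF P c coercive] by blast
  define Q where "Q x = x - (1 / k) *\<^sub>R P x" for x
  interpret contraction Q r
    unfolding Q_def[abs_def] using P r contr by (rule contraction_shift)
  define R where "R x = sqrt k *\<^sub>R op_series Q (binom_coef (1/2)) x" for x
  define Ri where "Ri x = (1 / sqrt k) *\<^sub>R op_series Q (binom_coef (- (1/2))) x" for x
  have series_op: "bounded_op (op_series Q (binom_coef a))" if "\<bar>a\<bar> \<le> 1" for a
    by (rule bounded_op_series[OF abs_binom_coef_le_1[OF that]])
  have sqrt_k: "sqrt k * sqrt k = k" "sqrt k > 0" using k by auto
  have R_op: "bounded_op R" and Ri_op: "bounded_op Ri"
    unfolding R_def[abs_def] Ri_def[abs_def] by (auto intro!: bounded_op_scaleR_op series_op)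
  have R_pos: "positive_op R"
    unfolding positive_op_def using R_op sqrt_series_nonneg sqrt_k(2)
    by (auto simp: R_def cinner_scaleR_left cinner_scaleR_right
        selfadjoint_op_series[OF abs_binom_coef_le_1])
  have R_GL: "R \<in> GL"
  proof (rule GLI[OF R_op Ri_op])
    show "R (Ri x) = x" "Ri (R x) = x" for x
      unfolding R_def Ri_def using sqrt_k
      by (simp_all add: bounded_op_scaleR[OF series_op] sqrt_series_inverse)
  qed
  have R_square: "\<forall>x. R (R x) = P x"
    unfolding R_def using sqrt_k k
    by (simp add: bounded_op_scaleR[OF series_op] sqrt_series_squared Q_def)
  have R_GL_plus: "R \<in> GL_plus" using R_pos R_GL by (simp add: GL_plus_def)
  show ?thesis
  proof (intro bexI[OF _ R_GL_plus] conjI R_square allI impI, elim conjE)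
    fix C x assume C: "bounded_op C" and PC: "\<forall>y. C (P y) = P (C y)"
    have "C (Q y) = Q (C y)" for y
      by (simp add: Q_def bounded_op_diff[OF C] bounded_op_scaleR[OF C] PC)
    then show "C (R x) = R (C x)"
      unfolding R_def by (simp add: bounded_op_scaleR[OF C] op_series_commute[OF abs_binom_coef_le_1 C])
  qed
qed

text \<open>If \<open>\<langle>A y, y\<rangle> = 0\<close>, then \<open>\<langle>A v, v\<rangle> \<ge> 0\<close> at \<open>v = y - t A y\<close> gives \<open>2t\<parallel>A y\<parallel>\<^sup>2 \<le> t\<^sup>2\<langle>A\<^sup>2y, A y\<rangle>\<close>,
  which fails for small \<open>t > 0\<close> unless \<open>A y = 0\<close>.\<close>

lemma positive_op_form_eq_0:
  assumes A: "positive_op A" and zero: "Re (cinner (A y) y) = 0"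
  shows "A y = 0"
proof (rule ccontr)
  assume "A y \<noteq> 0"
  note A_op = positive_opD(1)[OF A]
  define a M n where "a = A y" and "M = Re (cinner (A a) a)" and "n = (norm a)\<^sup>2"
  define t where "t = n / (M + 1)"
  have M: "M \<ge> 0" using positive_opD(3)[OF A] by (simp add: M_def)
  have n: "n > 0" using \<open>A y \<noteq> 0\<close> by (simp add: n_def a_def)
  have t: "t > 0" using n M by (simp add: t_def)
  define v where "v = y - t *\<^sub>R a"
  have Av: "A v = a - t *\<^sub>R A a"
    by (simp add: v_def a_def bounded_op_diff[OF A_op] bounded_op_scaleR[OF A_op])
  have Aay: "cinner (A a) y = cinner a a" by (simp add: positive_opD(2)[OF A] a_def)
  have "cinner (A v) v = cinner a y - of_real t * cinner a a - of_real t * cinner (A a) y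
      + of_real t * of_real t * cinner (A a) a"
    by (subst Av, unfold v_def)
       (simp add: cinner_diff_left cinner_diff_right cinner_scaleR_left cinner_scaleR_right
        algebra_simps)
  also have "\<dots> = cinner (A y) y - of_real (2 * t) * cinner a a + of_real (t * t) * cinner (A a) a"
    unfolding Aay by (simp add: a_def algebra_simps)
  finally have "Re (cinner (A v) v) = Re (cinner (A y) y) - 2 * t * n + t * t * M"
    by (simp add: cinner_self n_def M_def)
  then have "2 * t * n \<le> t * (t * M)"
    using positive_opD(3)[OF A, of v] zero by (simp add: algebra_simps)
  then have "2 * n \<le> t * M" using t by (simp add: mult.assoc)
  moreover have "t * M < n"
  proof -
    have "t * M = n * (M / (M + 1))" by (simp add: t_def)
    also have "\<dots> < n * 1" using n M by (intro mult_strict_left_mono) auto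
    finally show ?thesis by simp
  qed
  ultimately show False using n by simp
qed

lemma positive_sqrt_eq:
  assumes A: "A \<in> GL_plus" and R: "positive_op R"
    and square: "\<And>x. R (R x) = A (A x)" and commute: "\<And>x. A (R x) = R (A x)"
  shows "R x = A x"
proof -
  obtain Ai where A_op: "bounded_op A" and Ai: "bounded_op Ai" "\<And>x. A (Ai x) = x" "\<And>x. Ai (A x) = x"
    using GLE[OF GL_plusD(1)[OF A]] by blast
  note A_pos = GL_plusD(2)[OF A] and R_op = positive_opD(1)[OF R]
  define y where "y = R x - A x"
  text \<open>\<open>(R + A)(R - A) = R\<^sup>2 - A\<^sup>2 = 0\<close>, since \<open>R\<close> and \<open>A\<close> commute.\<close>
  have "R y = - A y"
    using square[of x] commute[of x]
    by (simp add: y_def bounded_op_diff[OF R_op] bounded_op_diff[OF A_op] eq_neg_iff_add_eq_0)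
  then have "Re (cinner (A y) y) = - Re (cinner (R y) y)" by (simp add: cinner_minus_left)
  then have "Re (cinner (A y) y) = 0"
    using positive_opD(3)[OF A_pos, of y] positive_opD(3)[OF R, of y] by simp
  then have "A y = 0" by (rule positive_op_form_eq_0[OF A_pos])
  then have "y = 0" using Ai(3)[of y] bounded_op_0[OF Ai(1)] by simp
  then show ?thesis by (simp add: y_def)
qed

theorem GL_plus_sqrt_unique:
  assumes A: "A \<in> GL_plus" and B: "B \<in> GL_plus" and square: "\<And>x. A (A x) = B (B x)"
  shows "A = B"
proof -
  obtain Ai where A_op: "bounded_op A" and Ai: "bounded_op Ai" "\<And>x. A (Ai x) = x" "\<And>x. Ai (A x) = x"
    using GLE[OF GL_plusD(1)[OF A]] by blast
  note A_pos = GL_plusD(2)[OF A]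
  define P where "P x = A (A x)" for x
  obtain L where L: "L > 0" "\<And>x. norm (Ai x) \<le> L * norm x" using bounded_op_bound[OF Ai(1)] by auto
  have P: "positive_op P"
    unfolding positive_op_def P_def
    using positive_opD(2)[OF A_pos] by (simp add: bounded_op_comp[OF A_op A_op] cinner_self)
  have coercive: "(1 / L\<^sup>2) * (norm x)\<^sup>2 \<le> Re (cinner (P x) x)" for x
  proof -
    have "norm x \<le> L * norm (A x)" using L(2)[of "A x"] Ai(3)[of x] by simp
    then have "(norm x)\<^sup>2 \<le> (L * norm (A x))\<^sup>2" by (intro power_mono) auto
    then have "(1 / L\<^sup>2) * (norm x)\<^sup>2 \<le> (norm (A x))\<^sup>2"
      using L(1) by (simp add: field_simps power_mult_distrib)
    also have "(norm (A x))\<^sup>2 = Re (cinner (P x) x)"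
      by (simp add: P_def positive_opD(2)[OF A_pos, of "A x" x] Re_cinner_self)
    finally show ?thesis .
  qed
  have "1 / L\<^sup>2 > 0" using L(1) by simp
  from positive_sqrt_exists[OF P this coercive] obtain R where R: "R \<in> GL_plus" "\<forall>x. R (R x) = P x"
    and R_commute: "\<forall>C. bounded_op C \<and> (\<forall>y. C (P y) = P (C y)) \<longrightarrow> (\<forall>x. C (R x) = R (C x))"
    by (elim bexE conjE)
  note R_pos = GL_plusD(2)[OF R(1)]
  have "(\<forall>y. A (P y) = P (A y)) \<and> (\<forall>y. B (P y) = P (B y))"
    using square by (simp add: P_def)
  then have "\<forall>x. A (R x) = R (A x)" "\<forall>x. B (R x) = R (B x)"
    using R_commute A_op positive_opD(1)[OF GL_plusD(2)[OF B]] by blast+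
  then have "R x = A x" "R x = B x" for x
    using R(2) square unfolding P_def
    by (auto intro: positive_sqrt_eq[OF A R_pos] positive_sqrt_eq[OF B R_pos])
  then show ?thesis by auto
qed

section \<open>The frame operator\<close>

locale bounded_frame =
  fixes M :: "'x measure" and g :: "'x \<Rightarrow> 'a::chilbert_space" and a b :: real
  assumes measurable [measurable]: "\<And>\<phi>. (\<lambda>x. cinner \<phi> (g x)) \<in> borel_measurable M"
    and a_pos: "0 < a" and a_le_b: "a \<le> b"
    and lower: "\<And>\<phi>. ennreal (a * (norm \<phi>)\<^sup>2) \<le> (\<integral>\<^sup>+ x. ennreal ((cmod (cinner \<phi> (g x)))\<^sup>2) \<partial>M)"
    and upper: "\<And>\<phi>. (\<integral>\<^sup>+ x. ennreal ((cmod (cinner \<phi> (g x)))\<^sup>2) \<partial>M) \<le> ennreal (b * (norm \<phi>)\<^sup>2)"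
begin

lemma integrable_coef_sq: "integrable M (\<lambda>x. (cmod (cinner \<phi> (g x)))\<^sup>2)"
  using upper[of \<phi>] by (intro integrableI_bounded) (auto simp: le_less_trans)

lemma nn_integral_coef_sq:
  "(\<integral>\<^sup>+ x. ennreal ((cmod (cinner \<phi> (g x)))\<^sup>2) \<partial>M) = ennreal (\<integral> x. (cmod (cinner \<phi> (g x)))\<^sup>2 \<partial>M)"
  by (rule nn_integral_eq_integral[OF integrable_coef_sq]) simp

lemma integral_coef_sq_bounds:
  "a * (norm \<phi>)\<^sup>2 \<le> (\<integral> x. (cmod (cinner \<phi> (g x)))\<^sup>2 \<partial>M)"
  "(\<integral> x. (cmod (cinner \<phi> (g x)))\<^sup>2 \<partial>M) \<le> b * (norm \<phi>)\<^sup>2"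
proof -
  have "0 \<le> (\<integral> x. (cmod (cinner \<phi> (g x)))\<^sup>2 \<partial>M)" by (intro integral_nonneg_AE) simp
  then show "a * (norm \<phi>)\<^sup>2 \<le> (\<integral> x. (cmod (cinner \<phi> (g x)))\<^sup>2 \<partial>M)"
    using lower[of \<phi>] by (simp add: nn_integral_coef_sq ennreal_le_iff)
  show "(\<integral> x. (cmod (cinner \<phi> (g x)))\<^sup>2 \<partial>M) \<le> b * (norm \<phi>)\<^sup>2"
    using upper[of \<phi>] a_pos a_le_b by (simp add: nn_integral_coef_sq ennreal_le_iff)
qed

lemma measurable_cnj_coef [measurable]: "(\<lambda>x. cnj (cinner \<psi> (g x))) \<in> borel_measurable M"
  by (rule borel_measurable_continuous_on[OF _ measurable]) (intro continuous_intros)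

lemma integrable_coef_mult:
  "integrable M (\<lambda>x. cinner \<phi> (g x) * cnj (cinner \<psi> (g x)))"
proof (rule Bochner_Integration.integrable_bound)
  show "integrable M (\<lambda>x. (cmod (cinner \<phi> (g x)))\<^sup>2 + (cmod (cinner \<psi> (g x)))\<^sup>2)"
    by (intro Bochner_Integration.integrable_add integrable_coef_sq)
  show "AE x in M. norm (cinner \<phi> (g x) * cnj (cinner \<psi> (g x)))
      \<le> norm ((cmod (cinner \<phi> (g x)))\<^sup>2 + (cmod (cinner \<psi> (g x)))\<^sup>2)"
    by (auto simp: norm_mult intro!: abs_le_square_iff[THEN iffD1] order_trans[OF _ sum_squares_bound])
qed measurable

definition frame_form :: "'a \<Rightarrow> 'a \<Rightarrow> complex" where
  "frame_form \<phi> \<psi> = (\<integral> x. cinner \<phi> (g x) * cnj (cinner \<psi> (g x)) \<partial>M)"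

lemma frame_form_add_left: "frame_form (\<phi>1 + \<phi>2) \<psi> = frame_form \<phi>1 \<psi> + frame_form \<phi>2 \<psi>"
  unfolding frame_form_def cinner_add_left distrib_right
  by (intro Bochner_Integration.integral_add integrable_coef_mult)

lemma frame_form_scaleC_left: "frame_form (scaleC c \<phi>) \<psi> = c * frame_form \<phi> \<psi>"
  unfolding frame_form_def cinner_scaleC_left by (simp add: mult.assoc)

lemma cnj_frame_form: "cnj (frame_form \<phi> \<psi>) = frame_form \<psi> \<phi>"
proof -
  have "cnj (frame_form \<phi> \<psi>) = (\<integral> x. cnj (cinner \<phi> (g x) * cnj (cinner \<psi> (g x))) \<partial>M)"
    unfolding frame_form_def by (rule Bochner_Integration.integral_cnj[symmetric])
  then show ?thesis unfolding frame_form_def by (simp add: mult.commute)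
qed

lemma frame_form_add_right: "frame_form \<psi> (\<phi>1 + \<phi>2) = frame_form \<psi> \<phi>1 + frame_form \<psi> \<phi>2"
  by (metis frame_form_add_left cnj_frame_form complex_cnj_add)

lemma frame_form_scaleC_right: "frame_form \<psi> (scaleC c \<phi>) = cnj c * frame_form \<psi> \<phi>"
  by (metis frame_form_scaleC_left cnj_frame_form complex_cnj_mult)

lemma frame_form_self: "frame_form \<phi> \<phi> = of_real (\<integral> x. (cmod (cinner \<phi> (g x)))\<^sup>2 \<partial>M)"
  unfolding frame_form_def complex_norm_square[symmetric] by (rule integral_complex_of_real)

lemma norm_frame_form_le_sum: "cmod (frame_form \<phi> \<psi>) \<le> b * ((norm \<phi>)\<^sup>2 + (norm \<psi>)\<^sup>2)"
proof -
  have "cmod (frame_form \<phi> \<psi>) \<le> (\<integral> x. norm (cinner \<phi> (g x) * cnj (cinner \<psi> (g x))) \<partial>M)"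
    unfolding frame_form_def by (rule integral_norm_bound)
  also have "\<dots> \<le> (\<integral> x. (cmod (cinner \<phi> (g x)))\<^sup>2 + (cmod (cinner \<psi> (g x)))\<^sup>2 \<partial>M)"
    by (intro Bochner_Integration.integral_mono Bochner_Integration.integrable_norm
        integrable_coef_mult Bochner_Integration.integrable_add integrable_coef_sq)
       (auto simp: norm_mult intro!: abs_le_square_iff[THEN iffD1] order_trans[OF _ sum_squares_bound])
  also have "\<dots> \<le> b * (norm \<phi>)\<^sup>2 + b * (norm \<psi>)\<^sup>2"
    by (simp add: Bochner_Integration.integral_add integrable_coef_sq add_mono integral_coef_sq_bounds)
  finally show ?thesis by (simp add: distrib_left)
qed

lemma norm_frame_form_le: "cmod (frame_form \<phi> \<psi>) \<le> 2 * b * norm \<phi> * norm \<psi>"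
proof (cases "\<phi> = 0 \<or> \<psi> = 0")
  case True
  then show ?thesis by (auto simp: frame_form_def)
next
  case False
  define \<phi>' \<psi>' where "\<phi>' = scaleC (of_real (1 / norm \<phi>)) \<phi>" and "\<psi>' = scaleC (of_real (1 / norm \<psi>)) \<psi>"
  have unit: "norm \<phi>' = 1" "norm \<psi>' = 1"
    using False by (simp_all add: \<phi>'_def \<psi>'_def norm_scaleC norm_divide)
  have "frame_form \<phi> \<psi> = frame_form (scaleC (of_real (norm \<phi>)) \<phi>') (scaleC (of_real (norm \<psi>)) \<psi>')"
    using False by (simp add: \<phi>'_def \<psi>'_def scaleC_scaleC scaleC_one)
  also have "\<dots> = of_real (norm \<phi>) * of_real (norm \<psi>) * frame_form \<phi>' \<psi>'"
    by (simp add: frame_form_scaleC_left frame_form_scaleC_right)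
  finally have "cmod (frame_form \<phi> \<psi>) = norm \<phi> * norm \<psi> * cmod (frame_form \<phi>' \<psi>')"
    by (simp add: norm_mult)
  also have "\<dots> \<le> norm \<phi> * norm \<psi> * (b * (1 + 1))"
    using norm_frame_form_le_sum[of \<phi>' \<psi>'] unit by (intro mult_left_mono) auto
  finally show ?thesis by (simp add: mult_ac)
qed

definition frame_op :: "'a \<Rightarrow> 'a" where
  "frame_op \<phi> = (SOME w. \<forall>\<psi>. frame_form \<psi> \<phi> = cinner \<psi> w)"

lemma frame_form_eq: "frame_form \<psi> \<phi> = cinner \<psi> (frame_op \<phi>)"
proof -
  have "\<exists>w. \<forall>\<psi>. frame_form \<psi> \<phi> = cinner \<psi> w"
    using norm_frame_form_le
    by (intro riesz_representation[where K="2 * b * norm \<phi>"])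
       (simp_all add: frame_form_add_left frame_form_scaleC_left mult_ac)
  then show ?thesis unfolding frame_op_def by (rule someI_ex[THEN spec])
qed

lemma frame_op_selfadjoint: "cinner (frame_op x) y = cinner x (frame_op y)"
  by (metis cinner_commute cnj_frame_form frame_form_eq)

lemma cinner_frame_op_self: "cinner (frame_op \<phi>) \<phi> = of_real (\<integral> x. (cmod (cinner \<phi> (g x)))\<^sup>2 \<partial>M)"
  by (metis frame_op_selfadjoint frame_form_eq frame_form_self)

lemma positive_frame_op: "positive_op frame_op"
proof -
  have "frame_op (x + y) = frame_op x + frame_op y" "frame_op (scaleC c x) = scaleC c (frame_op x)"
    for c x y
    by (rule cinner_ext_right; simp add: frame_form_eq[symmetric] cinner_add_right
        cinner_scaleC_right frame_form_add_right frame_form_scaleC_right)+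
  moreover have "norm (frame_op x) \<le> (2 * b) * norm x" for x
  proof -
    have "(norm (frame_op x))\<^sup>2 = cmod (frame_form (frame_op x) x)"
      by (simp add: frame_form_eq cinner_self norm_power)
    also have "\<dots> \<le> (2 * b) * norm (frame_op x) * norm x" by (rule norm_frame_form_le)
    finally show ?thesis
      using a_pos a_le_b by (cases "frame_op x = 0") (auto simp: power2_eq_square mult_ac)
  qed
  moreover have "0 \<le> Re (cinner (frame_op x) x)" for x
    unfolding cinner_frame_op_self by (simp add: integral_nonneg_AE)
  ultimately show ?thesis
    unfolding positive_op_def bounded_op_def clinear_op_def using frame_op_selfadjoint by blast
qed

end

lemma frame_operator_exists:
  fixes g :: "'x \<Rightarrow> 'a::chilbert_space"
  assumes "is_frame M g"
  shows "\<exists>S c. positive_op S \<and> c > 0 \<and> (\<forall>\<phi>. c * (norm \<phi>)\<^sup>2 \<le> Re (cinner (S \<phi>) \<phi>))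
     \<and> (\<forall>\<phi>. (\<integral>\<^sup>+ x. ennreal ((cmod (cinner \<phi> (g x)))\<^sup>2) \<partial>M) = ennreal (Re (cinner (S \<phi>) \<phi>)))"
proof -
  from assms obtain a b where "bounded_frame M g a b"
    unfolding is_frame_def bounded_frame_def by blast
  then interpret bounded_frame M g a b .
  show ?thesis
    using positive_frame_op a_pos integral_coef_sq_bounds(1)
    by (intro exI[of _ frame_op] exI[of _ a])
       (simp add: cinner_frame_op_self nn_integral_coef_sq)
qed

lemma parseval_frameD:
  assumes "is_parseval_frame M f"
  shows "(\<lambda>x. cinner \<phi> (f x)) \<in> borel_measurable M"
    "(\<integral>\<^sup>+ x. ennreal ((cmod (cinner \<phi> (f x)))\<^sup>2) \<partial>M) = ennreal ((norm \<phi>)\<^sup>2)"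
  using assms unfolding is_parseval_frame_def by auto

lemma parseval_frame_comp:
  assumes f: "is_parseval_frame M f" and T: "bounded_op T"
  shows "(\<lambda>x. cinner \<phi> (T (f x))) \<in> borel_measurable M"
    "(\<integral>\<^sup>+ x. ennreal ((cmod (cinner \<phi> (T (f x))))\<^sup>2) \<partial>M) = ennreal ((norm (adj T \<phi>))\<^sup>2)"
  using parseval_frameD[OF f, of "adj T \<phi>"] by (simp_all add: cinner_adj'[OF T])

lemma J_spaceI: "(\<And>x. norm (f x) \<le> c) \<Longrightarrow> f \<in> J_space"
  unfolding J_space_def bounded_iff by auto

lemma J_spaceE:
  assumes "f \<in> J_space"
  obtains c where "\<And>x. norm (f x) \<le> c"
  using assms unfolding J_space_def bounded_iff by auto

lemma norm_le_J_norm: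
  assumes "f \<in> J_space"
  shows "norm (f x) \<le> J_norm f"
proof -
  obtain c where "\<And>x. norm (f x) \<le> c" using J_spaceE[OF assms] by auto
  then have "bdd_above (range (\<lambda>x. norm (f x)))" by (intro bdd_aboveI[where M=c]) auto
  then show ?thesis unfolding J_norm_def by (rule cSUP_upper[OF UNIV_I])
qed

lemma J_norm_nonneg: "f \<in> J_space \<Longrightarrow> 0 \<le> J_norm f"
  using norm_le_J_norm[of f undefined] by (simp add: order_trans[OF norm_ge_zero])

lemma J_norm_le: "(\<And>x. norm (f x) \<le> c) \<Longrightarrow> J_norm f \<le> c"
  unfolding J_norm_def by (rule cSUP_least) auto

lemma J_space_diff:
  assumes "f \<in> J_space" "g \<in> J_space"
  shows "(\<lambda>x. f x - g x) \<in> J_space"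
proof -
  obtain a b where "\<And>x. norm (f x) \<le> a" "\<And>x. norm (g x) \<le> b"
    using J_spaceE[OF assms(1)] J_spaceE[OF assms(2)] by metis
  then show ?thesis
    by (intro J_spaceI[where c="a + b"]) (meson add_mono norm_triangle_ineq4 order_trans)
qed

lemma bounded_op_comp_J_space:
  assumes A: "bounded_op A" and f: "f \<in> J_space"
  shows "A \<circ> f \<in> J_space"
proof -
  obtain K where K: "K > 0" "\<And>x. norm (A x) \<le> K * norm x" using bounded_op_bound[OF A] by auto
  obtain c where "\<And>x. norm (f x) \<le> c" using J_spaceE[OF f] by auto
  then have "norm (A (f x)) \<le> K * c" for x
    using K by (meson order_trans mult_left_mono less_imp_le)
  then show ?thesis by (intro J_spaceI[where c="K * c"]) simp
qed

lemma J_dist_comp_le: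
  assumes A: "bounded_op A" and B: "bounded_op B" and f: "f \<in> J_space" and g: "g \<in> J_space"
  shows "J_dist (B \<circ> g) (A \<circ> f) \<le> onorm B * J_dist g f + op_dist B A * J_norm f"
  unfolding J_dist_def
proof (rule J_norm_le)
  fix x
  have diff: "bounded_linear (\<lambda>x. B x - A x)"
    by (rule bounded_op_linear[OF bounded_op_diff_op[OF B A]])
  have eq: "(B \<circ> g) x - (A \<circ> f) x = B (g x - f x) + (B (f x) - A (f x))"
    by (simp add: bounded_op_diff[OF B])
  have "norm ((B \<circ> g) x - (A \<circ> f) x) \<le> norm (B (g x - f x)) + norm (B (f x) - A (f x))"
    unfolding eq by (rule norm_triangle_ineq)
  also have "\<dots> \<le> onorm B * norm (g x - f x) + op_dist B A * norm (f x)"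
    unfolding op_dist_def
    using onorm[OF bounded_op_linear[OF B]] onorm[OF diff] by (intro add_mono) auto
  also have "\<dots> \<le> onorm B * J_dist g f + op_dist B A * J_norm f"
    unfolding J_dist_def op_dist_def
    using onorm_pos_le[OF bounded_op_linear[OF B]] onorm_pos_le[OF diff]
      norm_le_J_norm[OF f] norm_le_J_norm[OF J_space_diff[OF g f]]
    by (intro add_mono mult_left_mono) auto
  finally show "norm ((B \<circ> g) x - (A \<circ> f) x) \<le> onorm B * J_norm (\<lambda>x. g x - f x) + op_dist B A * J_norm f"
    by (simp add: J_dist_def)
qed

lemma continuous_OJ_comp:
  assumes "\<And>A f. (A, f) \<in> D \<Longrightarrow> bounded_op A \<and> f \<in> J_space"
  shows "continuous_OJ D (\<lambda>(A, f). A \<circ> f)"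
  unfolding continuous_OJ_def
proof (clarify)
  fix A f and e :: real assume "(A, f) \<in> D" "e > 0"
  then have A: "bounded_op A" and f: "f \<in> J_space" using assms by auto
  define C where "C = onorm A + J_norm f + 1"
  have C: "C > 0"
    using onorm_pos_le[OF bounded_op_linear[OF A]] J_norm_nonneg[OF f] by (simp add: C_def)
  define d where "d = min 1 (e / (2 * C))"
  have d: "d > 0" "d \<le> 1" using \<open>e > 0\<close> C by (auto simp: d_def)
  have "C * d \<le> C * (e / (2 * C))" using C by (intro mult_left_mono) (auto simp: d_def)
  then have Cd: "C * d < e" using C \<open>e > 0\<close> by simp
  show "\<exists>d>0. \<forall>(B, g)\<in>D. op_dist B A < d \<and> J_dist g f < d \<longrightarrow> J_dist (B \<circ> g) (A \<circ> f) < e"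
  proof (intro exI[of _ d] conjI d(1) ballI impI, clarify)
    fix B g assume "(B, g) \<in> D" and dB: "op_dist B A < d" and dg: "J_dist g f < d"
    then have B: "bounded_op B" and g: "g \<in> J_space" using assms by auto
    have "onorm B \<le> onorm A + op_dist B A"
      using onorm_triangle[OF bounded_op_linear[OF A] bounded_op_linear[OF bounded_op_diff_op[OF B A]]]
      by (simp add: op_dist_def)
    then have "onorm B * J_dist g f \<le> (onorm A + d) * d"
      using dB dg onorm_pos_le[OF bounded_op_linear[OF B]] J_norm_nonneg[OF J_space_diff[OF g f]]
      by (intro mult_mono) (auto simp: J_dist_def)
    moreover have "op_dist B A * J_norm f \<le> d * J_norm f"
      using dB J_norm_nonneg[OF f] by (intro mult_right_mono) auto
    ultimately have "J_dist (B \<circ> g) (A \<circ> f) \<le> (onorm A + d) * d + d * J_norm f"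
      using J_dist_comp_le[OF A B f g] by linarith
    also have "\<dots> = (onorm A + d + J_norm f) * d" by (simp add: algebra_simps)
    also have "\<dots> \<le> C * d" using d by (intro mult_right_mono) (auto simp: C_def)
    finally show "J_dist (B \<circ> g) (A \<circ> f) < e" using Cd by simp
  qed
qed

lemma GL_comp_parseval_frame:
  assumes A: "A \<in> GL" and f: "f \<in> parseval_frames M"
  shows "A \<circ> f \<in> frames M"
proof -
  obtain Ai where A_op: "bounded_op A" and Ai: "bounded_op Ai" "\<And>x. A (Ai x) = x" "\<And>x. Ai (A x) = x"
    using GLE[OF A] by blast
  have fP: "is_parseval_frame M f" and fJ: "f \<in> J_space" using f by (auto simp: parseval_frames_def)
  obtain K where K: "K > 0" "\<And>x. norm (adj A x) \<le> K * norm x"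
    using bounded_op_bound[OF bounded_op_adj[OF A_op]] by auto
  obtain L where L: "L > 0" "\<And>x. norm (adj Ai x) \<le> L * norm x"
    using bounded_op_bound[OF bounded_op_adj[OF Ai(1)]] by auto
  define a where "a = min (1 / L\<^sup>2) (K\<^sup>2)"
  have a: "0 < a" "a \<le> K\<^sup>2" using K(1) L(1) by (auto simp: a_def)
  have "a * (norm \<phi>)\<^sup>2 \<le> (norm (adj A \<phi>))\<^sup>2" for \<phi>
  proof -
    have "norm \<phi> \<le> L * norm (adj A \<phi>)"
      using L(2)[of "adj A \<phi>"] adj_inverse[OF A_op Ai(1,2)] by simp
    then have "(norm \<phi>)\<^sup>2 \<le> (L * norm (adj A \<phi>))\<^sup>2" by (intro power_mono) auto
    then have "(1 / L\<^sup>2) * (norm \<phi>)\<^sup>2 \<le> (norm (adj A \<phi>))\<^sup>2"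
      using L(1) by (simp add: field_simps power_mult_distrib)
    moreover have "a * (norm \<phi>)\<^sup>2 \<le> (1 / L\<^sup>2) * (norm \<phi>)\<^sup>2"
      by (intro mult_right_mono) (auto simp: a_def)
    ultimately show ?thesis by linarith
  qed
  moreover have "(norm (adj A \<phi>))\<^sup>2 \<le> K\<^sup>2 * (norm \<phi>)\<^sup>2" for \<phi>
    using power_mono[OF K(2)[of \<phi>]] by (simp add: power_mult_distrib)
  ultimately have "is_frame M (A \<circ> f)"
    unfolding is_frame_def comp_def parseval_frame_comp(2)[OF fP A_op]
    using parseval_frame_comp(1)[OF fP A_op] a by (blast intro: ennreal_leI)
  with bounded_op_comp_J_space[OF A_op fJ] show ?thesis by (simp add: frames_def)
qed

text \<open>Every frame is \<open>S\<^sup>1\<^sup>/\<^sup>2 \<circ> S\<^sup>-\<^sup>1\<^sup>/\<^sup>2 g\<close> with \<open>S\<close> its frame operator, and \<open>S\<^sup>-\<^sup>1\<^sup>/\<^sup>2 g\<close> is Parseval.\<close>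

lemma frame_eq_GL_plus_comp_parseval:
  assumes g: "g \<in> frames M"
  shows "\<exists>R \<in> GL_plus. \<exists>f \<in> parseval_frames M. g = R \<circ> f"
proof -
  have gJ: "g \<in> J_space" and g_frame: "is_frame M g" using g unfolding frames_def by auto
  obtain S c where S: "positive_op S" "c > 0" "\<forall>\<phi>. c * (norm \<phi>)\<^sup>2 \<le> Re (cinner (S \<phi>) \<phi>)"
    and S_form: "\<forall>\<phi>. (\<integral>\<^sup>+ x. ennreal ((cmod (cinner \<phi> (g x)))\<^sup>2) \<partial>M) = ennreal (Re (cinner (S \<phi>) \<phi>))"
    using frame_operator_exists[OF g_frame] by blast
  obtain R where R: "R \<in> GL_plus" and RR: "\<forall>x. R (R x) = S x"
    using positive_sqrt_exists[OF S(1,2) S(3)[rule_format]] by blast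
  obtain Ri where R_op: "bounded_op R" and Ri: "bounded_op Ri" "\<And>x. R (Ri x) = x" "\<And>x. Ri (R x) = x"
    using GLE[OF GL_plusD(1)[OF R]] by blast
  note R_pos = GL_plusD(2)[OF R]
  have Ri_selfadjoint: "cinner (Ri x) y = cinner x (Ri y)" for x y
    by (metis Ri(2) positive_opD(2)[OF R_pos])
  have coef: "cinner \<phi> (Ri (g x)) = cinner (Ri \<phi>) (g x)" for \<phi> x
    by (simp add: Ri_selfadjoint)
  have "is_parseval_frame M (Ri \<circ> g)"
    unfolding is_parseval_frame_def comp_def coef
  proof (intro conjI allI)
    fix \<phi>
    show "(\<lambda>x. cinner (Ri \<phi>) (g x)) \<in> borel_measurable M" using g_frame by (simp add: is_frame_def)
    have "S (Ri \<phi>) = R \<phi>" by (metis RR Ri(2))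
    then show "(\<integral>\<^sup>+ x. ennreal ((cmod (cinner (Ri \<phi>) (g x)))\<^sup>2) \<partial>M) = ennreal ((norm \<phi>)\<^sup>2)"
      using S_form positive_opD(2)[OF R_pos, of \<phi> "Ri \<phi>"] by (simp add: Ri(2) Re_cinner_self)
  qed
  moreover have "Ri \<circ> g \<in> J_space" by (rule bounded_op_comp_J_space[OF Ri(1) gJ])
  moreover have "g = R \<circ> (Ri \<circ> g)" by (simp add: fun_eq_iff Ri(2))
  ultimately show ?thesis using R unfolding parseval_frames_def by blast
qed

lemma parseval_frame_determines_op:
  assumes f: "is_parseval_frame M f" and A: "bounded_op A" and B: "bounded_op B"
    and eq: "A \<circ> f = B \<circ> f"
  shows "A = B"
proof -
  define D where "D x = A x - B x" for x
  have D: "bounded_op D" unfolding D_def[abs_def] by (rule bounded_op_diff_op[OF A B])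
  have "ennreal ((norm (adj D \<phi>))\<^sup>2) = 0" for \<phi>
    using parseval_frame_comp(2)[OF f D, of \<phi>] eq by (simp add: D_def fun_eq_iff)
  then have "adj D \<phi> = 0" for \<phi> by simp
  then have "D x = 0" for x by (metis cinner_adj[OF D] cinner_self_eq_zero cinner_zero_right)
  then show ?thesis by (auto simp: D_def fun_eq_iff)
qed

text \<open>An invertible operator mapping a Parseval frame onto a Parseval frame has an isometric
  adjoint, hence is unitary.\<close>

lemma GL_between_parseval_frames_unitary:
  assumes f: "is_parseval_frame M f" and g: "is_parseval_frame M g"
    and T: "T \<in> GL" and eq: "g = T \<circ> f"
  shows "T \<in> unitary_group"
proof -
  obtain Ti where T_op: "bounded_op T" and Ti: "bounded_op Ti" "\<And>x. T (Ti x) = x" "\<And>x. Ti (T x) = x"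
    using GLE[OF T] by blast
  have "ennreal ((norm (adj T \<phi>))\<^sup>2) = ennreal ((norm \<phi>)\<^sup>2)" for \<phi>
    using parseval_frame_comp(2)[OF f T_op, of \<phi>] parseval_frameD(2)[OF g, of \<phi>] eq by simp
  then have "norm (adj T \<phi>) = norm \<phi>" for \<phi> by (simp add: power2_eq_iff_nonneg)
  then have "cinner (adj T x) (adj T y) = cinner x y" for x y
    by (rule isometry_preserves_cinner[OF bounded_op_adj[OF T_op]])
  then have "T (adj T x) = x" for x
    by (intro cinner_ext) (simp add: cinner_adj[OF T_op])
  then have adj_T: "adj T x = Ti x" for x by (metis Ti(3))
  have "cinner (T x) (T y) = cinner x y" for x y
    by (simp add: cinner_adj[OF T_op] adj_T Ti(3))
  moreover have "bij T" by (rule o_bij[of Ti]) (auto simp: fun_eq_iff Ti)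
  ultimately show ?thesis unfolding unitary_group_def using T_op by blast
qed

lemma bij_betw_compI:
  assumes "\<And>A f. A \<in> S \<Longrightarrow> f \<in> T \<Longrightarrow> A \<circ> f \<in> F"
    and "\<And>g. g \<in> F \<Longrightarrow> \<exists>A \<in> S. \<exists>f \<in> T. g = A \<circ> f"
    and "\<And>A B f g. A \<in> S \<Longrightarrow> B \<in> S \<Longrightarrow> f \<in> T \<Longrightarrow> g \<in> T \<Longrightarrow> A \<circ> f = B \<circ> g \<Longrightarrow> A = B \<and> f = g"
  shows "bij_betw (\<lambda>(A, f). A \<circ> f) (S \<times> T) F"
  unfolding bij_betw_def inj_on_def using assms by (fastforce simp: image_iff)

section \<open>The maps \<open>\<zeta>\<close> and \<open>\<zeta>\<^sup>+\<close>\<close>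

lemma GL_plus_comp_parseval_inj:
  assumes A: "A \<in> GL_plus" and B: "B \<in> GL_plus"
    and f: "f \<in> parseval_frames M" and g: "g \<in> parseval_frames M" and eq: "A \<circ> f = B \<circ> g"
  shows "A = B \<and> f = g"
proof -
  have fP: "is_parseval_frame M f" and gP: "is_parseval_frame M g"
    using f g unfolding parseval_frames_def by auto
  note A_pos = GL_plusD(2)[OF A] and B_pos = GL_plusD(2)[OF B]
  note A_op = positive_opD(1)[OF A_pos] and B_op = positive_opD(1)[OF B_pos]
  have "adj A x = A x" "adj B x = B x" for x
    by (rule adj_unique[OF A_op positive_opD(2)[OF A_pos]] adj_unique[OF B_op positive_opD(2)[OF B_pos]])+
  then have "ennreal ((norm (A \<phi>))\<^sup>2) = ennreal ((norm (B \<phi>))\<^sup>2)" for \<phi>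
    using parseval_frame_comp(2)[OF fP A_op, of \<phi>] parseval_frame_comp(2)[OF gP B_op, of \<phi>] eq
    by (simp add: fun_eq_iff)
  then have n: "(norm (A \<phi>))\<^sup>2 = (norm (B \<phi>))\<^sup>2" for \<phi>
    by (metis ennreal_inj zero_le_power2)
  have form: "cinner (A (A \<phi>) - B (B \<phi>)) \<phi> = 0" for \<phi>
  proof -
    have "cinner (A (A \<phi>)) \<phi> = of_real ((norm (A \<phi>))\<^sup>2)"
      using positive_opD(2)[OF A_pos, of "A \<phi>" \<phi>] cinner_self[of "A \<phi>"] by simp
    moreover have "cinner (B (B \<phi>)) \<phi> = of_real ((norm (B \<phi>))\<^sup>2)"
      using positive_opD(2)[OF B_pos, of "B \<phi>" \<phi>] cinner_self[of "B \<phi>"] by simp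
    ultimately show ?thesis by (simp only: cinner_diff_left n diff_self)
  qed
  have "bounded_op (\<lambda>x. A (A x) - B (B x))"
    by (intro bounded_op_diff_op bounded_op_comp[OF A_op A_op] bounded_op_comp[OF B_op B_op])
  from bounded_op_eq_0_if_form_eq_0[OF this form] have "A (A x) - B (B x) = 0" for x .
  then have "A = B" using GL_plus_sqrt_unique[OF A B] by simp
  moreover obtain Bi where "bounded_op B" "bounded_op Bi" "\<And>x. B (Bi x) = x" and Bi: "\<And>x. Bi (B x) = x"
    using GLE[OF GL_plusD(1)[OF B]] by blast
  then have "f = g" using eq \<open>A = B\<close> by (metis comp_apply ext)
  ultimately show ?thesis ..
qed

lemma GL_comp_transversal_inj:
  assumes F0bar: "unitary_transversal M F0bar" and A: "A \<in> GL" and B: "B \<in> GL"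
    and f: "f \<in> F0bar" and g: "g \<in> F0bar" and eq: "A \<circ> f = B \<circ> g"
  shows "A = B \<and> f = g"
proof -
  have sub: "F0bar \<subseteq> parseval_frames M" using F0bar unfolding unitary_transversal_def by auto
  then have fP: "is_parseval_frame M f" and gP: "is_parseval_frame M g"
    using f g unfolding parseval_frames_def by auto
  obtain Ai where A_op: "bounded_op A" and Ai: "bounded_op Ai" "\<And>x. A (Ai x) = x" "\<And>x. Ai (A x) = x"
    using GLE[OF A] by blast
  obtain Bi where B_op: "bounded_op B" and Bi: "bounded_op Bi" "\<And>x. B (Bi x) = x" "\<And>x. Bi (B x) = x"
    using GLE[OF B] by blast
  have "(\<lambda>x. Bi (A x)) \<in> GL"
    by (rule GLI[where Ai="\<lambda>x. Ai (B x)"]) (simp_all add: bounded_op_comp A_op B_op Ai Bi)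
  moreover have "A (f x) = B (g x)" for x using eq by (metis comp_apply)
  then have "g = (\<lambda>x. Bi (A x)) \<circ> f" by (simp add: fun_eq_iff Bi(3))
  ultimately have "(\<lambda>x. Bi (A x)) \<in> unitary_group"
    by (rule GL_between_parseval_frames_unitary[OF fP gP])
  moreover have "\<exists>!h. h \<in> F0bar \<and> (\<exists>V\<in>unitary_group. h = V \<circ> f)"
    using F0bar f sub unfolding unitary_transversal_def by blast
  moreover have "f = (\<lambda>x. x) \<circ> f" by (simp add: comp_def)
  ultimately have "f = g"
    using f g id_unitary \<open>g = (\<lambda>x. Bi (A x)) \<circ> f\<close> by blast
  then show ?thesis using parseval_frame_determines_op[OF fP A_op B_op] eq by simp
qed

lemma frame_eq_GL_comp_transversal:
  assumes F0bar: "unitary_transversal M F0bar" and g: "g \<in> frames M"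
  shows "\<exists>A \<in> GL. \<exists>h \<in> F0bar. g = A \<circ> h"
proof -
  obtain R f where R: "R \<in> GL_plus" and f: "f \<in> parseval_frames M" and g_eq: "g = R \<circ> f"
    using frame_eq_GL_plus_comp_parseval[OF g] by blast
  obtain h V where h: "h \<in> F0bar" and V: "V \<in> unitary_group" and h_eq: "h = V \<circ> f"
    using F0bar f unfolding unitary_transversal_def by blast
  obtain Vi where V_op: "bounded_op V" and Vi: "bounded_op Vi" "\<And>x. V (Vi x) = x" "\<And>x. Vi (V x) = x"
    using GLE[OF unitary_GL[OF V]] by blast
  obtain Ri where R_op: "bounded_op R" and Ri: "bounded_op Ri" "\<And>x. R (Ri x) = x" "\<And>x. Ri (R x) = x"
    using GLE[OF GL_plusD(1)[OF R]] by blast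
  have "(\<lambda>x. R (Vi x)) \<in> GL"
    by (rule GLI[where Ai="\<lambda>x. V (Ri x)"]) (simp_all add: bounded_op_comp R_op V_op Ri Vi)
  moreover have "g = (\<lambda>x. R (Vi x)) \<circ> h" by (simp add: g_eq h_eq fun_eq_iff Vi)
  ultimately show ?thesis using h by blast
qed

theorem mainTheorem2:
  fixes M :: "'x::topological_space measure"
    and F0bar :: "('x \<Rightarrow> 'h::chilbert_space) set"
  assumes "separable_space TYPE('h)"
    and "locally_compact_space (euclidean :: 'x topology)"
    and "sets M = sets borel"
    and "unitary_transversal M F0bar"
  shows "continuous_OJ (GL \<times> F0bar) (\<lambda>(A, f). A \<circ> f)
       \<and> bij_betw (\<lambda>(A, f). A \<circ> f) (GL \<times> F0bar) (frames M)
       \<and> continuous_OJ (GL_plus \<times> parseval_frames M) (\<lambda>(A, f). A \<circ> (f :: 'x \<Rightarrow> 'h))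
       \<and> bij_betw (\<lambda>(A, f). A \<circ> (f :: 'x \<Rightarrow> 'h)) (GL_plus \<times> parseval_frames M) (frames M)"
proof -
  have F0bar: "F0bar \<subseteq> parseval_frames M"
    using assms(4) unfolding unitary_transversal_def by auto
  have domain: "bounded_op A \<and> f \<in> J_space" if "A \<in> GL" "f \<in> parseval_frames M" for A f
    using that by (auto simp: GL_def parseval_frames_def)
  show ?thesis
  proof (intro conjI)
    show "continuous_OJ (GL \<times> F0bar) (\<lambda>(A, f). A \<circ> f)"
      using domain F0bar by (intro continuous_OJ_comp) blast
    show "bij_betw (\<lambda>(A, f). A \<circ> f) (GL \<times> F0bar) (frames M)"
      using F0bar GL_comp_parseval_frame frame_eq_GL_comp_transversal[OF assms(4)]
        GL_comp_transversal_inj[OF assms(4)]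
      by (intro bij_betw_compI) blast+
    show "continuous_OJ (GL_plus \<times> parseval_frames M) (\<lambda>(A, f). A \<circ> (f :: 'x \<Rightarrow> 'h))"
      using domain GL_plusD(1) by (intro continuous_OJ_comp) blast
    show "bij_betw (\<lambda>(A, f). A \<circ> f) (GL_plus \<times> parseval_frames M) (frames M)"
      using GL_comp_parseval_frame GL_plusD(1) frame_eq_GL_plus_comp_parseval GL_plus_comp_parseval_inj
      by (intro bij_betw_compI) blast+
  qed
qed

end
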